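(* For every positive integer $n$, the map $\Psi$ (defined below) is a bijection from $\mathcal{W}^o_n$ to $\mathcal{W}^e_n$ satisfying $\operatorname{wt}(\Psi(w))=\operatorname{wt}(w)$ for all $w\in\mathcal{W}^o_n$.
   Context: Fix a finite totally ordered alphabet $A=\{a_1<\dots<a_k\}$. Words are finite sequences over $A$; $-$ denotes the empty word; $\mathcal{W}_n$ is the set of words of length $n$. $<$ is the lexicographic order on words (a proper prefix is smaller than the word). A formal symbol $\infty$ satisfies $w<\infty$ for every word $w$. A nonempty word is primitive if it is not of the form $r^j$, $j\ge2$; a Lyndon word is a nonempty word strictly smaller than each of its proper nonempty suffixes (equivalently, a primitive word strictly smaller than all other cyclic rotations of it); $\mathcal{L}$ denotes the set of Lyndon words. Every word has a unique Lyndon factorization $w=\ell_1\cdots\ell_m$ with $\ell_i\in\mathcal{L}$ and $\ell_1\ge\dots\ge\ell_m$; we write $w=\ell_1|\cdots|\ell_m$ and call the $\ell_i$ the Lyndon factors. A word is odd/even if its length is odd/even. For $\ell\in\mathcal{L}$ with $|\ell|\ge2$, its standard factorization is $\ell=rs$ where $s$ is the longest proper suffix of $\ell$ belonging to $\mathcal{L}$ (equivalently, the lexicographically smallest proper nonempty suffix); then $r\in\mathcal{L}$ and $r<\ell<s$. The weight $\operatorname{wt}(w)=x_1^{\beta_1}\cdots x_k^{\beta_k}$, where $\beta_i$ is the number of occurrences of $a_i$ in $w$. $\mathcal{W}^o_n$: words in $\mathcal{W}_n$ whose Lyndon factors are all odd and pairwise distinct. $\mathcal{W}^e_n$: words in $\mathcal{W}_n$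 whose Lyndon factors are all even except possibly one factor of length one. The map $\Psi$: on input $w\in\mathcal{W}^o_n$, set $(O,E)=(w,-)$. While $|O|\ge2$, apply the step $(\psi)$: let $O=o_1|\cdots|o_m$ be the Lyndon factorization of $O$ (with the convention $o_{m-1}=\infty$ if $m=1$). Call $o_m$ splittable if $|o_m|\ge2$ and its standard factorization $o_m=rs$ satisfies $s<o_{m-1}$. Update $(O,E)$ to: (S) $(o_1\cdots o_{m-1}r,\ sE)$ if $o_m$ is splittable and $r$ is odd; (P) $(o_1\cdots o_{m-1}s,\ rE)$ if $o_m$ is splittable and $r$ is even; (F) $(o_1\cdots o_{m-2},\ o_mo_{m-1}E)$ if $o_m$ is not splittable. If $|O|=1$ is reached, remove this letter from $O$ and insert it into $E$ as a new Lyndon factor, placed in the unique position keeping the Lyndon factors of $E$ weakly decreasing from left to right. When $O$ is empty, set $\Psi(w)=E$. *)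

theory Defs
  imports Main "HOL-Library.List_Lexorder"
begin

text \<open>Words over a totally ordered alphabet are lists of type 'a list with 'a::linorder.
  The order on words is the lexicographic order of HOL-Library.List_Lexorder
  (a proper prefix is smaller).\<close>

definition lyndon :: "'a::linorder list \<Rightarrow> bool" where
  "lyndon w \<longleftrightarrow> w \<noteq> [] \<and> (\<forall>k. 0 < k \<and> k < length w \<longrightarrow> w < drop k w)"

definition lyndon_fact :: "'a::linorder list \<Rightarrow> 'a list list" where
  "lyndon_fact w = (THE fs. concat fs = w \<and> (\<forall>f\<in>set fs. lyndon f) \<and> sorted_wrt (\<lambda>x y. y \<le> x) fs)"

definition std_cut :: "'a::linorder list \<Rightarrow> nat" where
  "std_cut l = (LEAST k. 0 < k \<and> k < length l \<and> lyndon (drop k l))"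

definition std_r :: "'a::linorder list \<Rightarrow> 'a list" where
  "std_r l = take (std_cut l) l"

definition std_s :: "'a::linorder list \<Rightarrow> 'a list" where
  "std_s l = drop (std_cut l) l"

text \<open>One step (psi) on the pair (O,E); identity when |O| < 2.
  With fs the Lyndon factorization of O, o_m = last fs and o_1...o_{m-1} = butlast fs;
  the convention o_{m-1} = infinity for m = 1 makes the condition s < o_{m-1} true.\<close>
definition psi_step :: "'a::linorder list \<times> 'a list \<Rightarrow> 'a list \<times> 'a list" where
  "psi_step OE = (case OE of (Ow, Ew) \<Rightarrow>
     if length Ow < 2 then (Ow, Ew) else
     (let fs = lyndon_fact Ow; om = last fs; pre = butlast fs;
          r = std_r om; s = std_s om;
          splittable = (2 \<le> length om \<and> (length fs = 1 \<or> s < last pre))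
      in if splittable \<and> odd (length r) then (concat pre @ r, s @ Ew)
         else if splittable then (concat pre @ s, r @ Ew)
         else (concat (butlast pre), om @ last pre @ Ew)))"

definition insert_letter :: "'a::linorder \<Rightarrow> 'a list \<Rightarrow> 'a list" where
  "insert_letter c Ew = (let fs = lyndon_fact Ew in
     concat (filter (\<lambda>e. \<not> e < [c]) fs @ [[c]] @ filter (\<lambda>e. e < [c]) fs))"

text \<open>The map Psi: iterate (psi) while |O| \<ge> 2 (each step strictly shortens O, so length w
  iterations suffice; afterwards psi_step is the identity), then handle |O| = 1.\<close>
definition Psi :: "'a::linorder list \<Rightarrow> 'a list" where
  "Psi w = (case (psi_step ^^ length w) (w, []) of (Ow, Ew) \<Rightarrow>
     if Ow = [] then Ew else insert_letter (hd Ow) Ew)"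

definition words :: "'a set \<Rightarrow> nat \<Rightarrow> 'a list set" where
  "words A n = {w. set w \<subseteq> A \<and> length w = n}"

definition W_odd :: "'a::linorder set \<Rightarrow> nat \<Rightarrow> 'a list set" where
  "W_odd A n = {w \<in> words A n. (\<forall>f\<in>set (lyndon_fact w). odd (length f)) \<and> distinct (lyndon_fact w)}"

definition W_even :: "'a::linorder set \<Rightarrow> nat \<Rightarrow> 'a list set" where
  "W_even A n = {w \<in> words A n.
     length (filter (\<lambda>f. odd (length f)) (lyndon_fact w)) \<le> 1 \<and>
     (\<forall>f\<in>set (lyndon_fact w). odd (length f) \<longrightarrow> length f = 1)}"

text \<open>Weight: exponent of each letter = number of its occurrences.\<close>
definition wt :: "'a list \<Rightarrow> 'a \<Rightarrow> nat" where
  "wt w = (\<lambda>a. count_list w a)"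

end

theory Submission
  imports Defs "HOL-Library.Multiset"
begin

text \<open>Each step (\<psi>) preserves the multiset of letters and an invariant of the Lyndon factorizations
  of \<open>O\<close> and \<open>E\<close>: the factors of \<open>O\<close> are odd and distinct, those of \<open>E\<close> are even, and the largest
  factor of \<open>E\<close> lies below every factor of \<open>O\<close> but the last, and below the standard right factor
  of the last one. Under this invariant a step can be undone. If the last factor \<open>o\<close> of \<open>O\<close> is
  smaller than the largest factor \<open>e\<close> of \<open>E\<close>, the step was (S). Otherwise \<open>e\<close> arose by merging
  a Lyndon word \<open>x\<close> with the following factors of \<open>E\<close>, and \<open>x\<close> is recovered by peeling off
  even standard right factors below \<open>o\<close>; then \<open>o \<le> std_s x\<close> characterizes (P), and the
  remaining case is (F). Conversely every state satisfying the invariant with \<open>E\<close> nonempty is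
  the image of a state satisfying the invariant with a longer \<open>O\<close>. So the iteration maps the
  words with distinct odd Lyndon factors bijectively onto the invariant states with \<open>|O| < 2\<close>,
  and inserting the remaining letter as a new factor of \<open>E\<close> maps these bijectively onto the
  words whose factors are even except for one letter.\<close>

section \<open>Lexicographic order and Lyndon words\<close>

lemma append_less_append_iff [simp]: "(p @ u < p @ v) \<longleftrightarrow> (u :: 'a::linorder list) < v"
  by (induction p) auto

lemma le_append: "(u :: 'a::linorder list) \<le> u @ v"
  by (induction u) auto

lemma less_append: "v \<noteq> [] \<Longrightarrow> (u :: 'a::linorder list) < u @ v"
  by (induction u) (auto simp: neq_Nil_conv)

lemma less_listE:
  fixes u v :: "'a::linorder list"
  assumes "u < v"
  obtains w where "v = u @ w" "w \<noteq> []" | "\<And>x y. u @ x < v @ y"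
proof -
  have "(\<exists>w. v = u @ w \<and> w \<noteq> []) \<or> (\<forall>x y. u @ x < v @ y)"
    using assms
  proof (induction u arbitrary: v)
    case Nil
    then show ?case by (cases v) auto
  next
    case (Cons a u)
    then obtain b v' where v: "v = b # v'" by (cases v) auto
    show ?case
    proof (cases "a < b")
      case True
      then show ?thesis using v by auto
    next
      case False
      then have "a = b" "u < v'" using Cons.prems v by auto
      then show ?thesis using Cons.IH[of v'] v by auto
    qed
  qed
  then show thesis using that by blast
qed

lemma less_append_mismatch:
  fixes u v :: "'a::linorder list"
  assumes "u < v" and "length v \<le> length u \<or> (\<nexists>w. v = u @ w)"
  shows "u @ x < v @ y"
  using assms by (cases rule: less_listE) auto

lemma le_imp_le_append: "(v :: 'a::linorder list) \<le> t \<Longrightarrow> v \<le> t @ x"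
proof (induction v arbitrary: t)
  case (Cons a v)
  then show ?case by (cases t) auto
qed simp

lemma append_eq_append_longerE:
  assumes "a @ b = c @ d" "length a \<le> length c"
  obtains z where "c = a @ z" "b = z @ d"
proof -
  have "a = take (length a) c" "b = drop (length a) c @ d"
    using arg_cong[OF assms(1), of "take (length a)"] arg_cong[OF assms(1), of "drop (length a)"]
      assms(2) by simp_all
  then show thesis using that by (metis append_take_drop_id)
qed

lemma lyndon_not_Nil: "lyndon w \<Longrightarrow> w \<noteq> []"
  by (simp add: lyndon_def)

lemma lyndon_less_suffix:
  assumes "lyndon w" "w = u @ v" "u \<noteq> []" "v \<noteq> []"
  shows "w < v"
proof -
  have "0 < length u" "length u < length w" using assms by auto
  then have "w < drop (length u) w" using assms(1) unfolding lyndon_def by blast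
  then show ?thesis using assms(2) by simp
qed

lemma lyndon_less_suffix_append:
  assumes "lyndon w" "w = u @ v" "u \<noteq> []" "v \<noteq> []"
  shows "w @ x < v @ y"
  using lyndon_less_suffix[OF assms] assms(2,3) by (intro less_append_mismatch) auto

lemma lyndonI:
  assumes "w \<noteq> []" "\<And>u v. w = u @ v \<Longrightarrow> u \<noteq> [] \<Longrightarrow> v \<noteq> [] \<Longrightarrow> w < v"
  shows "lyndon w"
  unfolding lyndon_def
proof (intro conjI allI impI)
  fix k assume "0 < k \<and> k < length w"
  then show "w < drop k w" using assms(1) assms(2)[of "take k w" "drop k w"] by auto
qed (use assms in auto)

lemma lyndon_singleton [simp]: "lyndon [a]"
  by (rule lyndonI) (auto simp: Cons_eq_append_conv)

lemma lyndon_append_self_less: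
  assumes "lyndon v" "t \<noteq> []" "t < v"
  shows "t @ v < v"
  using assms(3)
proof (cases rule: less_listE)
  case (1 z)
  then have "v < z" using lyndon_less_suffix[OF assms(1)] assms(2) by blast
  then show ?thesis using 1 by simp
next
  case 2
  then show ?thesis using 2[of v "[]"] by simp
qed

lemma lyndon_append:
  assumes lu: "lyndon u" and lv: "lyndon v" and uv: "u < v"
  shows "lyndon (u @ v)"
proof (rule lyndonI)
  show "u @ v \<noteq> []" using lu by (simp add: lyndon_def)
next
  have uvv: "u @ v < v"
    using lyndon_append_self_less[OF lv _ uv] lu by (simp add: lyndon_def)
  fix x y assume xy: "u @ v = x @ y" "x \<noteq> []" "y \<noteq> []"
  show "u @ v < y"
  proof (cases "length x < length u")
    case True
    then obtain t where t: "u = x @ t" "y = t @ v" "t \<noteq> []" using xy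
      by (auto simp: append_eq_append_conv2)
    then show ?thesis using lyndon_less_suffix_append[OF lu t(1) xy(2) t(3), of v v] by simp
  next
    case False
    then obtain t where t: "x = u @ t" "v = t @ y" using xy
      by (auto simp: append_eq_append_conv2)
    show ?thesis
    proof (cases "t = []")
      case True then show ?thesis using t uvv by simp
    next
      case False
      then have "v < y" using lyndon_less_suffix[OF lv t(2)] xy by auto
      then show ?thesis using uvv by simp
    qed
  qed
qed

lemma append_less_lyndon:
  assumes "lyndon s" "r < s" "E < s"
  shows "r @ E < s"
  using assms(2)
proof (cases rule: less_listE)
  case (1 y)
  show ?thesis
  proof (cases "r = []")
    case True then show ?thesis using assms(3) by simp
  next
    case False
    then have "s < y" using lyndon_less_suffix[OF assms(1) 1(1)] 1(2) by simp
    then show ?thesis using 1 assms(3) by simp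
  qed
next
  case 2 then show ?thesis using 2[of E "[]"] by simp
qed

lemma append_lyndon_append_less:
  assumes "lyndon a" "u < a" "u \<noteq> []"
  shows "u @ a @ E < a"
  using assms(2)
proof (cases rule: less_listE)
  case (1 y)
  then show ?thesis using lyndon_less_suffix_append[OF assms(1) 1(1) assms(3) 1(2), of E "[]"] by simp
next
  case 2 then show ?thesis using 2[of "a @ E" "[]"] by simp
qed

section \<open>Lyndon factorization\<close>

definition lyndon_factorization :: "'a::linorder list list \<Rightarrow> bool" where
  "lyndon_factorization fs \<longleftrightarrow> (\<forall>f\<in>set fs. lyndon f) \<and> sorted_wrt (\<lambda>x y. y \<le> x) fs"

lemma lyndon_factorization_Nil [simp]: "lyndon_factorization []"
  by (simp add: lyndon_factorization_def)

lemma lyndon_factorization_singleton [simp]: "lyndon_factorization [f] \<longleftrightarrow> lyndon f"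
  by (simp add: lyndon_factorization_def)

lemma lyndon_factorization_Cons:
  "lyndon_factorization (f # fs) \<longleftrightarrow> lyndon f \<and> (\<forall>g\<in>set fs. g \<le> f) \<and> lyndon_factorization fs"
  by (auto simp: lyndon_factorization_def)

lemma lyndon_factorization_append:
  "lyndon_factorization (fs @ gs) \<longleftrightarrow>
     lyndon_factorization fs \<and> lyndon_factorization gs \<and> (\<forall>f\<in>set fs. \<forall>g\<in>set gs. g \<le> f)"
  by (auto simp: lyndon_factorization_def sorted_wrt_append)

lemma lyndon_factorization_lyndon: "lyndon_factorization fs \<Longrightarrow> f \<in> set fs \<Longrightarrow> lyndon f"
  by (simp add: lyndon_factorization_def)

lemma lyndon_factorization_le_hd: "lyndon_factorization fs \<Longrightarrow> g \<in> set fs \<Longrightarrow> g \<le> hd fs"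
  by (cases fs) (auto simp: lyndon_factorization_Cons)

lemma lyndon_factorization_last_le:
  "lyndon_factorization fs \<Longrightarrow> f \<in> set fs \<Longrightarrow> last fs \<le> f"
  by (induction fs) (auto simp: lyndon_factorization_Cons)

lemma lyndon_factorization_filter: "lyndon_factorization fs \<Longrightarrow> lyndon_factorization (filter P fs)"
  by (simp add: lyndon_factorization_def sorted_wrt_filter)

lemma lyndon_factorization_mset_eq:
  assumes "lyndon_factorization fs" "lyndon_factorization gs" "mset fs = mset gs"
  shows "fs = gs"
proof -
  have "sorted (rev fs)" "sorted (rev gs)"
    using assms(1,2) by (simp_all add: lyndon_factorization_def sorted_wrt_rev)
  then have "rev fs = sort (rev gs)" "rev gs = sort (rev gs)"
    using properties_for_sort[of "rev fs" "rev gs"] assms(3) by (simp_all add: sorted_sort_id)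
  then show ?thesis by simp
qed

fun lyndon_merge :: "'a::linorder list \<Rightarrow> 'a list list \<Rightarrow> 'a list list" where
  "lyndon_merge x [] = [x]"
| "lyndon_merge x (e # es) = (if x < e then lyndon_merge (x @ e) es else x # e # es)"

lemma lyndon_merge_factorization:
  "lyndon x \<Longrightarrow> lyndon_factorization es \<Longrightarrow>
     lyndon_factorization (lyndon_merge x es) \<and> concat (lyndon_merge x es) = x @ concat es"
proof (induction x es rule: lyndon_merge.induct)
  case (2 x e es)
  show ?case
  proof (cases "x < e")
    case True
    have "lyndon (x @ e)" using lyndon_append[OF 2(2) _ True] 2(3) by (simp add: lyndon_factorization_Cons)
    then show ?thesis using 2(1)[OF True] 2(3) True by (simp add: lyndon_factorization_Cons)
  next
    case False
    then show ?thesis using 2 by (auto simp: lyndon_factorization_Cons intro: order.trans)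
  qed
qed simp

lemma lyndon_mergeE:
  obtains k where "k \<le> length es" "lyndon_merge x es = (x @ concat (take k es)) # drop k es"
    "\<forall>i<k. x @ concat (take i es) < es ! i"
proof -
  have "\<exists>k \<le> length es. lyndon_merge x es = (x @ concat (take k es)) # drop k es \<and>
      (\<forall>i<k. x @ concat (take i es) < es ! i)"
  proof (induction x es rule: lyndon_merge.induct)
    case (2 x e es)
    show ?case
    proof (cases "x < e")
      case True
      then obtain k where k: "k \<le> length es"
        "lyndon_merge (x @ e) es = (x @ e @ concat (take k es)) # drop k es"
        "\<forall>i<k. x @ e @ concat (take i es) < es ! i"
        using 2(1) by auto
      show ?thesis
      proof (intro exI[of _ "Suc k"] conjI allI impI)
        fix i assume "i < Suc k"
        then show "x @ concat (take i (e # es)) < (e # es) ! i"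
          using k(3) True by (cases i) auto
      qed (use k True in auto)
    next
      case False
      then show ?thesis by (intro exI[of _ 0]) auto
    qed
  qed simp
  then show thesis using that by blast
qed

lemma hd_lyndon_merge_le: "hd (lyndon_merge x es) \<le> x @ concat es"
proof -
  obtain k where "lyndon_merge x es = (x @ concat (take k es)) # drop k es"
    by (rule lyndon_mergeE)
  then show ?thesis
    using le_append[of "x @ concat (take k es)" "concat (drop k es)"]
    by (simp flip: concat_append)
qed

lemma even_length_concat: "\<forall>e\<in>set es. even (length e) \<Longrightarrow> even (length (concat es))"
  by (induction es) auto

lemma even_lyndon_merge:
  assumes "even (length x)" "\<forall>e\<in>set es. even (length e)"
  shows "\<forall>e\<in>set (lyndon_merge x es). even (length e)"
proof -
  obtain k where k: "lyndon_merge x es = (x @ concat (take k es)) # drop k es"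
    by (rule lyndon_mergeE)
  have "even (length (concat (take k es)))"
    using assms(2) by (intro even_length_concat) (auto dest: in_set_takeD)
  then show ?thesis using k assms by (auto dest: in_set_dropD)
qed

lemma lyndon_factorization_exists: "\<exists>fs. lyndon_factorization fs \<and> concat fs = w"
proof (induction w)
  case (Cons a w)
  then obtain fs where "lyndon_factorization fs" "concat fs = w" by blast
  then show ?case using lyndon_merge_factorization[of "[a]" fs] by auto
qed (intro exI[of _ "[]"], simp)

lemma lyndon_factorization_suffix_le_hd:
  "lyndon_factorization fs \<Longrightarrow> q \<noteq> [] \<Longrightarrow> concat fs = q @ r \<Longrightarrow>
     \<exists>t u. q = u @ t \<and> t \<noteq> [] \<and> t \<le> hd fs"
proof (induction fs arbitrary: q r)
  case (Cons g gs)
  show ?case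
  proof (cases "length q \<le> length g")
    case True
    then obtain z where "g = q @ z"
      using Cons.prems(3) append_eq_append_longerE[of q r g "concat gs"] by auto
    then have "q \<le> hd (g # gs)" using le_append[of q z] by simp
    then show ?thesis using Cons.prems(2) by (intro exI[of _ q] exI[of _ "[]"]) simp
  next
    case False
    then obtain q' where q': "q = g @ q'" "concat gs = q' @ r"
      using Cons.prems(3) append_eq_append_longerE[of g "concat gs" q r] by auto
    then have "q' \<noteq> []" "gs \<noteq> []" using False by auto
    moreover have "lyndon_factorization gs" "hd gs \<le> g"
      using Cons.prems(1) \<open>gs \<noteq> []\<close> by (auto simp: lyndon_factorization_Cons)
    ultimately obtain t u where "q' = u @ t" "t \<noteq> []" "t \<le> g"
      using Cons.IH q'(2) by (meson order.trans)
    then show ?thesis using q' by (intro exI[of _ t] exI[of _ "g @ u"]) auto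
  qed
qed simp

lemma lyndon_prefix_length_le_hd:
  assumes "lyndon_factorization (f # fs)" "lyndon p" "concat (f # fs) = p @ r"
  shows "length p \<le> length f"
proof (rule ccontr)
  assume "\<not> length p \<le> length f"
  then obtain q where q: "p = f @ q" "concat fs = q @ r"
    using assms(3) append_eq_append_longerE[of f "concat fs" p r] by auto
  have "q \<noteq> []" using q(1) \<open>\<not> length p \<le> length f\<close> by auto
  then have "fs \<noteq> []" using q(2) by auto
  obtain t u where tu: "q = u @ t" "t \<noteq> []" "t \<le> hd fs"
    using lyndon_factorization_suffix_le_hd[OF _ \<open>q \<noteq> []\<close> q(2)] assms(1)
    by (auto simp: lyndon_factorization_Cons)
  have "hd fs \<le> f" "f \<noteq> []"
    using assms(1) \<open>fs \<noteq> []\<close> by (auto simp: lyndon_factorization_Cons lyndon_def)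
  have "p < t" using lyndon_less_suffix[OF assms(2), of "f @ u" t] q tu \<open>f \<noteq> []\<close> by auto
  moreover have "f \<le> p" using q(1) le_append[of f q] by simp
  ultimately show False using tu(3) \<open>hd fs \<le> f\<close> by simp
qed

lemma lyndon_factorization_unique:
  "lyndon_factorization fs \<Longrightarrow> lyndon_factorization gs \<Longrightarrow> concat fs = concat gs \<Longrightarrow> fs = gs"
proof (induction fs arbitrary: gs)
  case Nil
  then show ?case by (cases gs) (auto simp: lyndon_factorization_Cons lyndon_def)
next
  case (Cons f fs)
  have f: "lyndon f" "lyndon_factorization fs"
    using Cons.prems(1) by (simp_all add: lyndon_factorization_Cons)
  then obtain g gs' where gs: "gs = g # gs'"
    using Cons.prems(3) lyndon_not_Nil by (cases gs) auto
  have g: "lyndon g" "lyndon_factorization gs'"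
    using Cons.prems(2) gs by (simp_all add: lyndon_factorization_Cons)
  have eq: "f @ concat fs = g @ concat gs'" using Cons.prems(3) gs by simp
  have "length g \<le> length f" "length f \<le> length g"
    using lyndon_prefix_length_le_hd[OF Cons.prems(1) g(1)]
      lyndon_prefix_length_le_hd[of g gs' f "concat fs"] Cons.prems(2) gs f(1) eq by simp_all
  then have "f = g" "concat fs = concat gs'"
    using append_eq_append_conv[of f g] eq by auto
  then show ?case using Cons.IH[OF f(2) g(2)] gs by simp
qed

lemma lyndon_fact_concat: "lyndon_factorization fs \<Longrightarrow> lyndon_fact (concat fs) = fs"
  unfolding lyndon_fact_def
  by (rule the_equality)
    (auto simp: lyndon_factorization_def intro: lyndon_factorization_unique[unfolded lyndon_factorization_def])

lemma lyndon_factorization_lyndon_fact: "lyndon_factorization (lyndon_fact w)"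
  and concat_lyndon_fact [simp]: "concat (lyndon_fact w) = w"
proof -
  obtain fs where "lyndon_factorization fs" "concat fs = w"
    using lyndon_factorization_exists by blast
  then show "lyndon_factorization (lyndon_fact w)" "concat (lyndon_fact w) = w"
    using lyndon_fact_concat[of fs] by simp_all
qed

lemma lyndon_fact_lyndon_merge: "lyndon x \<Longrightarrow> lyndon_fact (x @ w) = lyndon_merge x (lyndon_fact w)"
  using lyndon_fact_concat lyndon_merge_factorization[OF _ lyndon_factorization_lyndon_fact]
  by (metis concat_lyndon_fact)

lemma lyndon_fact_Nil [simp]: "lyndon_fact [] = []"
  using lyndon_fact_concat[OF lyndon_factorization_Nil] by simp

lemma lyndon_fact_singleton [simp]: "lyndon_fact [c] = [[c]]"
  using lyndon_fact_concat[of "[[c]]"] by simp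

lemma lyndon_fact_eq_Nil_iff [simp]: "lyndon_fact w = [] \<longleftrightarrow> w = []"
proof
  show "lyndon_fact w = [] \<Longrightarrow> w = []"
    using concat_lyndon_fact[of w] by (simp del: concat_lyndon_fact)
qed simp

lemma hd_le_concat: "fs \<noteq> [] \<Longrightarrow> hd fs \<le> concat (fs :: 'a::linorder list list)"
  by (cases fs) (simp_all add: le_append)

lemma concat_less_lyndon:
  "lyndon t \<Longrightarrow> lyndon_factorization es \<Longrightarrow> es \<noteq> [] \<Longrightarrow> hd es < t \<Longrightarrow> concat es < t"
proof (induction es arbitrary: t)
  case (Cons e es)
  show ?case
  proof (cases "es = []")
    case True then show ?thesis using Cons by simp
  next
    case False
    have "e < t" using Cons by simp
    then show ?thesis
    proof (cases rule: less_listE)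
      case (1 y)
      define ys where "ys = lyndon_fact y"
      have ys: "lyndon_factorization ys" "concat ys = y" "ys \<noteq> []"
        using lyndon_factorization_lyndon_fact 1 by (auto simp: ys_def)
      have "e \<noteq> []" using Cons.prems(2) by (simp add: lyndon_factorization_Cons lyndon_not_Nil)
      have "lyndon (last ys)" "lyndon (hd ys)"
        using lyndon_factorization_lyndon[OF ys(1)] ys(3) by simp_all
      have "y = concat (butlast ys @ [last ys])" using ys(2,3) by simp
      then have "y = concat (butlast ys) @ last ys" by simp
      then have "t = (e @ concat (butlast ys)) @ last ys" using 1 by simp
      then have "t < last ys"
        by (rule lyndon_less_suffix[OF Cons.prems(1)])
          (use \<open>e \<noteq> []\<close> lyndon_not_Nil[OF \<open>lyndon (last ys)\<close>] in simp_all)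
      moreover have "last ys \<le> hd ys" using lyndon_factorization_le_hd[OF ys(1) last_in_set[OF ys(3)]] .
      moreover have "hd es \<le> e" using Cons.prems False by (cases es) (auto simp: lyndon_factorization_Cons)
      ultimately have "hd es < hd ys" using \<open>e < t\<close> by order
      then have "concat es < hd ys"
        using Cons.IH \<open>lyndon (hd ys)\<close> Cons.prems(2) False by (simp add: lyndon_factorization_Cons)
      then have "concat es < y" using hd_le_concat[OF ys(3)] ys(2) by simp
      then show ?thesis using 1 by simp
    next
      case 2 then show ?thesis using 2[of "concat es" "[]"] by simp
    qed
  qed
qed simp

section \<open>Standard factorization\<close>

lemma std_cut_bounds:
  assumes "2 \<le> length l"
  shows "0 < std_cut l \<and> std_cut l < length l \<and> lyndon (drop (std_cut l) l)"
proof -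
  have "drop (length l - 1) l = [last l]" using assms
    by (cases l rule: rev_cases) auto
  then have "0 < length l - 1 \<and> length l - 1 < length l \<and> lyndon (drop (length l - 1) l)"
    using assms by simp
  then show ?thesis unfolding std_cut_def by (rule LeastI)
qed

lemma std_cut_least: "0 < j \<Longrightarrow> j < length l \<Longrightarrow> lyndon (drop j l) \<Longrightarrow> std_cut l \<le> j"
  unfolding std_cut_def by (rule Least_le) simp

lemma std_r_append_std_s [simp]: "std_r l @ std_s l = l"
  by (simp add: std_r_def std_s_def)

lemma
  assumes "2 \<le> length l"
  shows std_r_not_Nil: "std_r l \<noteq> []" and std_s_not_Nil: "std_s l \<noteq> []"
    and std_s_lyndon: "lyndon (std_s l)"
    and length_std_r_std_s: "length (std_r l) + length (std_s l) = length l"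
  using std_cut_bounds[OF assms] by (auto simp: std_r_def std_s_def)

lemma
  assumes "2 \<le> length l"
  shows length_std_r_less: "length (std_r l) < length l"
    and length_std_s_less: "length (std_s l) < length l"
proof -
  have "0 < length (std_r l)" "0 < length (std_s l)"
    using std_r_not_Nil[OF assms] std_s_not_Nil[OF assms] by simp_all
  then show "length (std_r l) < length l" "length (std_s l) < length l"
    using length_std_r_std_s[OF assms] by linarith+
qed

lemma lyndon_least_proper_suffix:
  assumes j0: "0 < j0" "j0 < length l"
    and least: "\<And>i. 0 < i \<Longrightarrow> i < length l \<Longrightarrow> drop j0 l \<le> drop i l"
  shows "lyndon (drop j0 l)"
proof (rule lyndonI)
  show "drop j0 l \<noteq> []" using j0 by simp
next
  fix u v assume uv: "drop j0 l = u @ v" "u \<noteq> []" "v \<noteq> []"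
  have "length l - j0 = length u + length v" using arg_cong[OF uv(1), of length] by simp
  moreover have "0 < length u" "0 < length v" using uv(2,3) by auto
  ultimately have "0 < j0 + length u" "j0 + length u < length l" using j0 by linarith+
  moreover have "v = drop (length u) (drop j0 l)" using uv(1) by simp
  then have "v = drop (j0 + length u) l" by (simp add: add.commute)
  ultimately have "drop j0 l \<le> v" using least by simp
  moreover have "drop j0 l \<noteq> v" using uv by auto
  ultimately show "drop j0 l < v" by simp
qed

lemma std_s_le_suffix:
  assumes j: "0 < j" "j < length l"
  shows "std_s l \<le> drop j l"
proof -
  have len: "2 \<le> length l" using j by linarith
  define J where "J = {1..<length l}"
  have fin: "finite ((\<lambda>j. drop j l) ` J)" and ne: "(\<lambda>j. drop j l) ` J \<noteq> {}"
    using len by (auto simp: J_def)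
  obtain j0 where "j0 \<in> J" and t: "drop j0 l = Min ((\<lambda>j. drop j l) ` J)"
    using Min_in[OF fin ne] by fastforce
  then have j0: "0 < j0" "j0 < length l" by (auto simp: J_def)
  have least: "\<And>i. 0 < i \<Longrightarrow> i < length l \<Longrightarrow> drop j0 l \<le> drop i l"
    unfolding t using fin by (intro Min_le) (auto simp: J_def)
  have lyndon: "lyndon (drop j0 l)" using lyndon_least_proper_suffix[OF j0 least] .
  then have k: "std_cut l \<le> j0" using std_cut_least j0 by blast
  have "std_s l = drop j0 l"
  proof (rule ccontr)
    assume ne: "std_s l \<noteq> drop j0 l"
    let ?k = "std_cut l"
    have "?k < j0" using ne k by (auto simp: std_s_def order.order_iff_strict)
    then have "drop (j0 - ?k) (std_s l) = drop j0 l" "take (j0 - ?k) (std_s l) \<noteq> []"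
      using j0 by (simp_all add: std_s_def)
    then have "std_s l = take (j0 - ?k) (std_s l) @ drop j0 l" "take (j0 - ?k) (std_s l) \<noteq> []"
      by (metis append_take_drop_id)+
    then have "std_s l < drop j0 l"
      using lyndon_less_suffix[OF std_s_lyndon[OF len]] lyndon_not_Nil[OF lyndon] by blast
    moreover have "drop j0 l \<le> std_s l" using least std_cut_bounds[OF len] by (simp add: std_s_def)
    ultimately show False by simp
  qed
  then show ?thesis using least j by simp
qed

lemma std_r_lyndon:
  assumes ly: "lyndon l" and len: "2 \<le> length l"
  shows "lyndon (std_r l)"
proof (rule lyndonI)
  show "std_r l \<noteq> []" using std_r_not_Nil[OF len] .
next
  let ?r = "std_r l" and ?s = "std_s l"
  fix p u assume pu: "?r = p @ u" "p \<noteq> []" "u \<noteq> []"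
  show "?r < u"
  proof (rule ccontr)
    assume "\<not> ?r < u"
    moreover have "?r \<noteq> u" using pu by auto
    ultimately have "u < ?r" by simp
    have lus: "l < u @ ?s"
      using lyndon_less_suffix[OF ly _ pu(2), of "u @ ?s"] pu std_r_append_std_s[of l] by auto
    from \<open>u < ?r\<close> show False
    proof (cases rule: less_listE)
      case (1 w)
      have l: "l = u @ (w @ ?s)" using std_r_append_std_s[of l] 1 by simp
      then have "u @ (w @ ?s) < u @ ?s" using lus by (simp only:)
      then have "w @ ?s < ?s" by (simp only: append_less_append_iff)
      moreover have "?s \<le> w @ ?s"
      proof -
        have "0 < length u" "0 < length w" "length (std_r l) = length u + length w"
          using pu(3) 1 by auto
        then have "0 < length u" "length u < length l"
          using length_std_r_std_s[OF len] by linarith+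
        moreover have "drop (length u) l = w @ ?s"
          using std_r_append_std_s[of l] 1(1) by (metis append_assoc append_eq_conv_conj)
        ultimately show ?thesis using std_s_le_suffix by metis
      qed
      ultimately show False by simp
    next
      case 2
      then show False using lus 2[of ?s ?s] by simp
    qed
  qed
qed

lemma std_r_less: "2 \<le> length l \<Longrightarrow> std_r l < l"
  using less_append[OF std_s_not_Nil, of l "std_r l"] by simp

lemma less_std_s: "lyndon l \<Longrightarrow> 2 \<le> length l \<Longrightarrow> l < std_s l"
  using lyndon_less_suffix[OF _ std_r_append_std_s[symmetric] std_r_not_Nil std_s_not_Nil] by blast

lemma std_r_less_std_s: "lyndon l \<Longrightarrow> 2 \<le> length l \<Longrightarrow> std_r l < std_s l"
  using std_r_less less_std_s by (blast intro: order.strict_trans)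

lemma std_s_le_std_s_std_r:
  assumes ly: "lyndon w" and len: "2 \<le> length w" and lenr: "2 \<le> length (std_r w)"
  shows "std_s w \<le> std_s (std_r w)"
proof (rule ccontr)
  let ?v = "std_s w" and ?t = "std_s (std_r w)" and ?ru = "std_r (std_r w)"
  assume "\<not> ?v \<le> ?t"
  then have "?t @ ?v < ?v"
    using lyndon_append_self_less[OF std_s_lyndon[OF len] std_s_not_Nil[OF lenr]] by simp
  moreover have "?v \<le> ?t @ ?v"
  proof -
    have w: "w = ?ru @ (?t @ ?v)"
      using std_r_append_std_s[of w] std_r_append_std_s[of "std_r w"] by (metis append_assoc)
    have "length w = length ?ru + length ?t + length ?v"
      using length_std_r_std_s[OF len] length_std_r_std_s[OF lenr] by simp
    then have "0 < length ?ru" "length ?ru < length w"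
      using std_r_not_Nil[OF lenr] std_s_not_Nil[OF len] by auto
    moreover have "drop (length ?ru) w = ?t @ ?v"
      using std_r_append_std_s[of w] std_r_append_std_s[of "std_r w"]
      by (metis append_assoc append_eq_conv_conj)
    ultimately show ?thesis using std_s_le_suffix by metis
  qed
  ultimately show False by simp
qed

lemma std_factors_append:
  assumes lu: "lyndon u" and lv: "lyndon v" and uv: "u < v"
    and c: "length u = 1 \<or> v \<le> std_s u"
  shows "std_r (u @ v) = u" "std_s (u @ v) = v"
proof -
  have une: "u \<noteq> []" and vne: "v \<noteq> []" using lu lv lyndon_not_Nil by auto
  have "std_cut (u @ v) = length u"
    unfolding std_cut_def
  proof (rule Least_equality)
    show "0 < length u \<and> length u < length (u @ v) \<and> lyndon (drop (length u) (u @ v))"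
      using une vne lv by simp
  next
    fix j assume j: "0 < j \<and> j < length (u @ v) \<and> lyndon (drop j (u @ v))"
    show "length u \<le> j"
    proof (rule ccontr)
      assume "\<not> length u \<le> j"
      then have jl: "j < length u" by simp
      then have "v \<le> std_s u" using c j by auto
      also have "std_s u \<le> drop j u" using std_s_le_suffix[of j u] j jl by simp
      finally have "v \<le> drop j u @ v" by (rule le_imp_le_append)
      moreover have "drop j u @ v < v"
        using lyndon_less_suffix[of "drop j u @ v" "drop j u" v] j jl vne by simp
      ultimately show False by simp
    qed
  qed
  then show "std_r (u @ v) = u" "std_s (u @ v) = v"
    by (simp_all add: std_r_def std_s_def)
qed

section \<open>The step (\<psi>) and its invariant\<close>

definition splittable :: "'a::linorder list list \<Rightarrow> 'a list \<Rightarrow> bool" where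
  "splittable pre om \<longleftrightarrow> 2 \<le> length om \<and> (pre = [] \<or> std_s om < last pre)"

lemma psi_step_short: "length Ow < 2 \<Longrightarrow> psi_step (Ow, E) = (Ow, E)"
  by (simp add: psi_step_def)

lemma length_lyndon_fact_snoc:
  assumes "lyndon_fact Ow = pre @ [om]"
  shows "length om \<le> length Ow"
proof -
  have "Ow = concat pre @ om" using concat_lyndon_fact[of Ow] assms by simp
  then show ?thesis by simp
qed

lemma psi_step_split_odd:
  assumes "lyndon_fact Ow = pre @ [om]" "splittable pre om" "odd (length (std_r om))"
  shows "psi_step (Ow, E) = (concat pre @ std_r om, std_s om @ E)"
  using assms length_lyndon_fact_snoc[OF assms(1)]
  by (simp add: psi_step_def splittable_def Let_def)

lemma psi_step_split_even:
  assumes "lyndon_fact Ow = pre @ [om]" "splittable pre om" "even (length (std_r om))"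
  shows "psi_step (Ow, E) = (concat pre @ std_s om, std_r om @ E)"
  using assms length_lyndon_fact_snoc[OF assms(1)]
  by (simp add: psi_step_def splittable_def Let_def)

lemma psi_step_fuse:
  assumes os: "lyndon_fact Ow = pre @ [a, om]" and nsp: "\<not> splittable (pre @ [a]) om"
  shows "psi_step (Ow, E) = (concat pre, om @ a @ E)"
proof -
  have "lyndon a" "lyndon om"
    using lyndon_factorization_lyndon[OF lyndon_factorization_lyndon_fact[of Ow]] os by simp_all
  moreover have "Ow = concat pre @ a @ om" using concat_lyndon_fact[of Ow] os by simp
  ultimately have len: "2 \<le> length Ow" using lyndon_not_Nil by (cases a; cases om) auto
  define p where "p = pre @ [a]"
  have "lyndon_fact Ow = p @ [om]" "\<not> splittable p om" using os nsp by (simp_all add: p_def)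
  then have "psi_step (Ow, E) = (concat (butlast p), om @ last p @ E)"
    using len by (auto simp: psi_step_def splittable_def Let_def)
  then show ?thesis by (simp add: p_def)
qed

lemma psi_step_cases:
  assumes "2 \<le> length Ow"
  obtains (S) pre om where "lyndon_fact Ow = pre @ [om]" "splittable pre om" "odd (length (std_r om))"
    "psi_step (Ow, E) = (concat pre @ std_r om, std_s om @ E)"
  | (P) pre om where "lyndon_fact Ow = pre @ [om]" "splittable pre om" "even (length (std_r om))"
    "psi_step (Ow, E) = (concat pre @ std_s om, std_r om @ E)"
  | (F) pre a om where "lyndon_fact Ow = pre @ [a, om]" "\<not> splittable (pre @ [a]) om"
    "psi_step (Ow, E) = (concat pre, om @ a @ E)"
proof -
  have "lyndon_fact Ow \<noteq> []" using assms by auto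
  then obtain pre om where os: "lyndon_fact Ow = pre @ [om]"
    by (cases "lyndon_fact Ow" rule: rev_cases) auto
  consider "splittable pre om" "odd (length (std_r om))"
    | "splittable pre om" "even (length (std_r om))" | "\<not> splittable pre om" by blast
  then show thesis
  proof cases
    case 3
    have "Ow = concat pre @ om" using concat_lyndon_fact[of Ow] os by simp
    then have "pre \<noteq> []" using 3 assms by (auto simp: splittable_def)
    then obtain pre' a where "pre = pre' @ [a]" by (cases pre rule: rev_cases) auto
    then show thesis using F[of pre' a om] psi_step_fuse[of Ow pre' a om E] os 3 by simp
  qed (use S P psi_step_split_odd psi_step_split_even os in blast)+
qed

lemma mset_psi_step: "mset (fst (psi_step z) @ snd (psi_step z)) = mset (fst z @ snd z)"
proof -
  obtain Ow E where z: "z = (Ow, E)" by fastforce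
  have Ow: "Ow = concat (lyndon_fact Ow)" by simp
  have split: "mset om = mset (std_r om) + mset (std_s om)" for om :: "'a list"
    by (metis mset_append std_r_append_std_s)
  show ?thesis
  proof (cases "length Ow < 2")
    case False
    then have "2 \<le> length Ow" by simp
    then show ?thesis
    proof (cases rule: psi_step_cases[of Ow E])
      case (S pre om)
      then show ?thesis using z Ow split[of om] by (simp add: ac_simps)
    next
      case (P pre om)
      then show ?thesis using z Ow split[of om] by (simp add: ac_simps)
    next
      case (F pre a om)
      then show ?thesis using z Ow by (simp add: ac_simps)
    qed
  qed (simp add: z psi_step_short)
qed

lemma psi_step_progress:
  assumes "2 \<le> length Ow"
  shows "length (fst (psi_step (Ow, E))) < length Ow" "snd (psi_step (Ow, E)) \<noteq> []"
proof -
  have Ow: "length Ow = length (concat (lyndon_fact Ow))" by simp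
  from assms have "length (fst (psi_step (Ow, E))) < length Ow \<and> snd (psi_step (Ow, E)) \<noteq> []"
  proof (cases rule: psi_step_cases[of Ow E])
    case (S pre om)
    then have "2 \<le> length om" by (simp add: splittable_def)
    then show ?thesis
      using S Ow length_std_r_less[of om] std_s_not_Nil[of om] by simp
  next
    case (P pre om)
    then have "2 \<le> length om" by (simp add: splittable_def)
    then show ?thesis
      using P Ow length_std_s_less[of om] std_r_not_Nil[of om] by simp
  next
    case (F pre a om)
    have "lyndon om" using lyndon_factorization_lyndon[OF lyndon_factorization_lyndon_fact[of Ow]] F(1)
      by simp
    then show ?thesis using F Ow lyndon_not_Nil by auto
  qed
  then show "length (fst (psi_step (Ow, E))) < length Ow" "snd (psi_step (Ow, E)) \<noteq> []" by simp_all
qed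

definition psi_invariant :: "'a::linorder list list \<Rightarrow> 'a list list \<Rightarrow> bool" where
  "psi_invariant os es \<longleftrightarrow> (\<forall>f\<in>set os. odd (length f)) \<and> distinct os \<and> (\<forall>e\<in>set es. even (length e)) \<and>
     (es \<noteq> [] \<longrightarrow> (\<forall>q\<in>set (butlast os). hd es < q) \<and>
        (os \<noteq> [] \<and> 2 \<le> length (last os) \<longrightarrow> hd es \<le> std_s (last os)))"

definition psi_admissible :: "'a::linorder list \<times> 'a list \<Rightarrow> bool" where
  "psi_admissible z \<longleftrightarrow> psi_invariant (lyndon_fact (fst z)) (lyndon_fact (snd z))"

lemma psi_admissible_start:
  "psi_admissible (w, []) \<longleftrightarrow> (\<forall>f\<in>set (lyndon_fact w). odd (length f)) \<and> distinct (lyndon_fact w)"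
  by (simp add: psi_admissible_def psi_invariant_def)

lemma lyndon_factorization_snoc_less:
  assumes "lyndon_factorization (pre @ [om])" "distinct (pre @ [om])" "f \<in> set pre"
  shows "om < f"
  using assms by (auto simp: lyndon_factorization_append order.order_iff_strict)

locale psi_source =
  fixes pre :: "'a::linorder list list" and om :: "'a list" and es :: "'a list list"
  assumes factorization_O: "lyndon_factorization (pre @ [om])"
    and factorization_E: "lyndon_factorization es"
    and invariant: "psi_invariant (pre @ [om]) es"
begin

lemma lyndon_om: "lyndon om"
  using factorization_O by (simp add: lyndon_factorization_append)

lemma factorization_pre: "lyndon_factorization pre"
  using factorization_O by (simp add: lyndon_factorization_append)

lemma odd_om: "odd (length om)"
  and odd_pre: "\<forall>f\<in>set pre. odd (length f)"
  and distinct_pre: "distinct pre"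
  and even_es: "\<forall>e\<in>set es. even (length e)"
  and hd_es_less_pre: "es \<noteq> [] \<Longrightarrow> f \<in> set pre \<Longrightarrow> hd es < f"
  and hd_es_le_std_s: "es \<noteq> [] \<Longrightarrow> 2 \<le> length om \<Longrightarrow> hd es \<le> std_s om"
  using invariant by (simp_all add: psi_invariant_def)

lemma om_less_pre: "f \<in> set pre \<Longrightarrow> om < f"
  using lyndon_factorization_snoc_less factorization_O invariant by (auto simp: psi_invariant_def)

lemma std_s_less_pre:
  assumes "splittable pre om" "f \<in> set pre"
  shows "std_s om < f"
proof -
  have "std_s om < last pre" using assms by (auto simp: splittable_def)
  also have "last pre \<le> f" using lyndon_factorization_last_le[OF factorization_pre assms(2)] .
  finally show ?thesis .
qed

lemma split_odd_invariant:
  assumes sp: "splittable pre om" and odd_r: "odd (length (std_r om))"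
  shows "lyndon_factorization (pre @ [std_r om])" "lyndon_factorization (std_s om # es)"
    "psi_invariant (pre @ [std_r om]) (std_s om # es)"
proof -
  let ?r = "std_r om" and ?s = "std_s om"
  have len: "2 \<le> length om" using sp by (simp add: splittable_def)
  have r_less: "?r < f" if "f \<in> set pre" for f
    using std_r_less[OF len] om_less_pre[OF that] by simp
  show "lyndon_factorization (pre @ [?r])"
    using factorization_pre std_r_lyndon[OF lyndon_om len] r_less
    by (auto simp: lyndon_factorization_append intro: less_imp_le)
  have "g \<le> ?s" if "g \<in> set es" for g
    using lyndon_factorization_le_hd[OF factorization_E that] hd_es_le_std_s[OF _ len] that by force
  then show "lyndon_factorization (?s # es)"
    using factorization_E std_s_lyndon[OF len] by (simp add: lyndon_factorization_Cons)
  have "even (length ?s)" using length_std_r_std_s[OF len] odd_om odd_r by presburger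
  then show "psi_invariant (pre @ [?r]) (?s # es)"
    using odd_pre odd_r distinct_pre r_less even_es std_s_less_pre[OF sp]
      std_s_le_std_s_std_r[OF lyndon_om len]
    by (auto simp: psi_invariant_def)
qed

lemma split_even_invariant:
  assumes sp: "splittable pre om" and even_r: "even (length (std_r om))"
  shows "lyndon_factorization (pre @ [std_s om])"
    "lyndon_factorization (lyndon_merge (std_r om) es)"
    "psi_invariant (pre @ [std_s om]) (lyndon_merge (std_r om) es)"
    "hd (lyndon_merge (std_r om) es) < std_s om"
proof -
  let ?r = "std_r om" and ?s = "std_s om"
  have len: "2 \<le> length om" using sp by (simp add: splittable_def)
  show "lyndon_factorization (pre @ [?s])"
    using factorization_pre std_s_lyndon[OF len] std_s_less_pre[OF sp]
    by (auto simp: lyndon_factorization_append intro: less_imp_le)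
  show "lyndon_factorization (lyndon_merge ?r es)"
    using lyndon_merge_factorization[OF std_r_lyndon[OF lyndon_om len] factorization_E] by simp
  have odd_s: "odd (length ?s)" using length_std_r_std_s[OF len] odd_om even_r by presburger
  have "concat es < ?s"
  proof (cases "es = []")
    case False
    have "hd es \<noteq> ?s" using even_es False odd_s by (metis hd_in_set)
    then have "hd es < ?s" using hd_es_le_std_s[OF False len] by simp
    then show ?thesis using concat_less_lyndon[OF std_s_lyndon[OF len] factorization_E False] by simp
  qed (use std_s_not_Nil[OF len] in \<open>cases "std_s om"; simp\<close>)
  then have "?r @ concat es < ?s"
    using append_less_lyndon[OF std_s_lyndon[OF len] std_r_less_std_s[OF lyndon_om len]] by simp
  then show hd_less: "hd (lyndon_merge ?r es) < ?s"
    using hd_lyndon_merge_le[of ?r es] by simp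
  have "?s < std_s ?s" if "2 \<le> length ?s" using less_std_s[OF std_s_lyndon[OF len] that] .
  then show "psi_invariant (pre @ [?s]) (lyndon_merge ?r es)"
    using odd_pre odd_s distinct_pre std_s_less_pre[OF sp] even_lyndon_merge[OF even_r even_es] hd_less
    by (auto simp: psi_invariant_def intro: order.strict_trans)
qed

lemma fuse_invariant:
  assumes pre: "pre = pre' @ [a]" and nsp: "\<not> splittable pre om"
  shows "lyndon_factorization pre'"
    "lyndon_factorization (lyndon_merge (om @ a) es)"
    "psi_invariant pre' (lyndon_merge (om @ a) es)"
    "hd (lyndon_merge (om @ a) es) < a"
proof -
  have la: "lyndon a" and oa: "om < a" using factorization_pre om_less_pre pre
    by (simp_all add: lyndon_factorization_append)
  have a_less: "a < f" if "f \<in> set pre'" for f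
    using lyndon_factorization_snoc_less[of pre' a] factorization_pre distinct_pre that pre by simp
  show "lyndon_factorization pre'" using factorization_pre pre by (simp add: lyndon_factorization_append)
  have lx: "lyndon (om @ a)" using lyndon_append[OF lyndon_om la oa] .
  show "lyndon_factorization (lyndon_merge (om @ a) es)"
    using lyndon_merge_factorization[OF lx factorization_E] by simp
  have "om @ a @ concat es < a" using append_lyndon_append_less[OF la oa lyndon_not_Nil[OF lyndon_om]] .
  then show hd_less: "hd (lyndon_merge (om @ a) es) < a"
    using hd_lyndon_merge_le[of "om @ a" es] by simp
  have "even (length (om @ a))" using odd_om odd_pre pre by simp
  then have "\<forall>e\<in>set (lyndon_merge (om @ a) es). even (length e)"
    using even_lyndon_merge even_es by blast
  moreover have "hd (lyndon_merge (om @ a) es) < q" if "q \<in> set (butlast pre')" for q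
    using a_less[OF in_set_butlastD[OF that]] hd_less by simp
  moreover have "a < std_s (last pre')" if "pre' \<noteq> []" "2 \<le> length (last pre')"
    using a_less[of "last pre'"] less_std_s[of "last pre'"] that \<open>lyndon_factorization pre'\<close>
      lyndon_factorization_lyndon by (meson last_in_set order.strict_trans)
  ultimately show "psi_invariant pre' (lyndon_merge (om @ a) es)"
    using odd_pre distinct_pre pre hd_less by (auto simp: psi_invariant_def)
qed

end

lemma psi_source_lyndon_fact:
  assumes "psi_admissible (Ow, E)" "lyndon_fact Ow = pre @ [om]"
  shows "psi_source pre om (lyndon_fact E)"
  using assms lyndon_factorization_lyndon_fact[of Ow] lyndon_factorization_lyndon_fact[of E]
  by unfold_locales (simp_all add: psi_admissible_def)

lemma psi_admissible_psi_step:
  assumes "psi_admissible (Ow, E)"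
  shows "psi_admissible (psi_step (Ow, E))"
proof (cases "length Ow < 2")
  case False
  then have "2 \<le> length Ow" by simp
  then show ?thesis
  proof (cases rule: psi_step_cases[of Ow E])
    case (S pre om)
    interpret psi_source pre om "lyndon_fact E" using psi_source_lyndon_fact[OF assms S(1)] .
    note new = split_odd_invariant[OF S(2,3)]
    have "lyndon_fact (concat pre @ std_r om) = pre @ [std_r om]"
      "lyndon_fact (std_s om @ E) = std_s om # lyndon_fact E"
      using lyndon_fact_concat[OF new(1)] lyndon_fact_concat[OF new(2)] by simp_all
    then show ?thesis using S(4) new(3) by (simp add: psi_admissible_def)
  next
    case (P pre om)
    interpret psi_source pre om "lyndon_fact E" using psi_source_lyndon_fact[OF assms P(1)] .
    note new = split_even_invariant[OF P(2,3)]
    have "lyndon_fact (concat pre @ std_s om) = pre @ [std_s om]"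
      "lyndon_fact (std_r om @ E) = lyndon_merge (std_r om) (lyndon_fact E)"
      using lyndon_fact_concat[OF new(1)] lyndon_fact_lyndon_merge[OF std_r_lyndon[OF lyndon_om]] P(2)
      by (simp_all add: splittable_def)
    then show ?thesis using P(4) new(3) by (simp add: psi_admissible_def)
  next
    case (F pre' a om)
    interpret psi_source "pre' @ [a]" om "lyndon_fact E" using psi_source_lyndon_fact[OF assms] F(1) by simp
    note new = fuse_invariant[OF refl F(2)]
    have "lyndon_fact (concat pre') = pre'"
      "lyndon_fact (om @ a @ E) = lyndon_merge (om @ a) (lyndon_fact E)"
      using lyndon_fact_concat[OF new(1)] lyndon_fact_lyndon_merge[of "om @ a" E]
        lyndon_append[OF lyndon_om _ om_less_pre] factorization_pre
      by (simp_all add: lyndon_factorization_append)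
    then show ?thesis using F(3) new(3) by (simp add: psi_admissible_def)
  qed
qed (simp add: assms psi_step_short)

section \<open>Inverting (\<psi>)\<close>

lemma even_length_ge_2: "even (length w) \<Longrightarrow> w \<noteq> [] \<Longrightarrow> 2 \<le> length w"
  by (cases w rule: remdups_adj.cases) auto

text \<open>The bound \<^const>\<open>None\<close> plays the role of \<open>\<infinity>\<close>.\<close>
definition below :: "'a::linorder list option \<Rightarrow> 'a list \<Rightarrow> bool" where
  "below b v \<longleftrightarrow> (case b of None \<Rightarrow> True | Some q \<Rightarrow> v < q)"

lemma below_simps [simp]: "below None v" "below (Some q) v \<longleftrightarrow> v < q"
  by (simp_all add: below_def)

text \<open>Undoes the merging of a Lyndon word into the factorization of \<open>E\<close> in the cases P and F of (\<psi>).\<close>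
function peel :: "'a::linorder list option \<Rightarrow> 'a list \<Rightarrow> 'a list \<times> 'a list list" where
  "peel b w = (if 2 \<le> length w \<and> even (length (std_s w)) \<and> below b (std_s w)
     then (case peel b (std_r w) of (x, ps) \<Rightarrow> (x, ps @ [std_s w])) else (w, []))"
  by pat_completeness auto
termination
  by (relation "measure (\<lambda>(b, w). length w)") (auto intro: length_std_r_less)

declare peel.simps [simp del]

lemma peel_stop: "\<not> (2 \<le> length w \<and> even (length (std_s w)) \<and> below b (std_s w)) \<Longrightarrow> peel b w = (w, [])"
  by (subst peel.simps) (rule if_not_P)

lemma peel_step: "2 \<le> length w \<Longrightarrow> even (length (std_s w)) \<Longrightarrow> below b (std_s w) \<Longrightarrow>
    peel b w = (fst (peel b (std_r w)), snd (peel b (std_r w)) @ [std_s w])"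
  by (subst peel.simps) (simp add: case_prod_beta)

lemma peel_decomposition:
  "lyndon w \<Longrightarrow> even (length w) \<Longrightarrow>
   w = fst (peel b w) @ concat (snd (peel b w)) \<and> lyndon (fst (peel b w)) \<and>
   even (length (fst (peel b w))) \<and> lyndon_factorization (snd (peel b w)) \<and>
   (\<forall>p\<in>set (snd (peel b w)). even (length p) \<and> below b p) \<and>
   (snd (peel b w) \<noteq> [] \<longrightarrow> hd (snd (peel b w)) \<le> std_s (fst (peel b w)) \<and> last (snd (peel b w)) = std_s w) \<and>
   \<not> (even (length (std_s (fst (peel b w)))) \<and> below b (std_s (fst (peel b w))))"
proof (induction b w rule: peel.induct)
  case (1 b w)
  have w2: "2 \<le> length w" using even_length_ge_2 1(3) lyndon_not_Nil[OF 1(2)] by blast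
  show ?case
  proof (cases "even (length (std_s w)) \<and> below b (std_s w)")
    case False
    then show ?thesis using peel_stop[of w b] 1(2,3) by simp
  next
    case True
    let ?u = "std_r w" and ?v = "std_s w"
    have lu: "lyndon ?u" using std_r_lyndon[OF 1(2) w2] .
    have "length ?u + length ?v = length w" using length_std_r_std_s[OF w2] .
    then have eu: "even (length ?u)" using True 1(3) by (metis even_add)
    have u2: "2 \<le> length ?u" using even_length_ge_2[OF eu std_r_not_Nil[OF w2]] .
    obtain x ps where xps: "peel b ?u = (x, ps)" by fastforce
    have IH: "?u = x @ concat ps" "lyndon x" "even (length x)" "lyndon_factorization ps"
      "\<forall>p\<in>set ps. even (length p) \<and> below b p"
      "ps \<noteq> [] \<Longrightarrow> hd ps \<le> std_s x \<and> last ps = std_s ?u"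
      "\<not> (even (length (std_s x)) \<and> below b (std_s x))"
      using 1(1)[OF _ lu eu] w2 True xps by simp_all
    have pw: "peel b w = (x, ps @ [?v])" using peel_step[OF w2] True xps by simp
    have vu: "?v \<le> std_s ?u" using std_s_le_std_s_std_r[OF 1(2) w2 u2] .
    have "?v \<le> p" if "p \<in> set ps" for p
      using lyndon_factorization_last_le[OF IH(4) that] IH(6) vu that by fastforce
    then have "lyndon_factorization (ps @ [?v])"
      using IH(4) std_s_lyndon[OF w2] by (simp add: lyndon_factorization_append)
    moreover have "w = x @ concat (ps @ [?v])" using std_r_append_std_s[of w] IH(1) by simp
    moreover have "hd (ps @ [?v]) \<le> std_s x" using IH(1,6) vu by (cases "ps = []") simp_all
    ultimately show ?thesis using pw IH True by auto
  qed
qed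

lemma peel_lyndon_merge:
  assumes lx: "lyndon x" and x2: "2 \<le> length x" and es: "lyndon_factorization es"
    and hd_le: "es \<noteq> [] \<Longrightarrow> hd es \<le> std_s x"
    and chain: "\<forall>i<k. x @ concat (take i es) < es ! i" and k: "k \<le> length es"
    and peelable: "\<forall>i<k. even (length (es ! i)) \<and> below b (es ! i)"
    and stop: "\<not> (even (length (std_s x)) \<and> below b (std_s x))"
  shows "peel b (x @ concat (take k es)) = (x, take k es)"
proof -
  have "peel b (x @ concat (take k es)) = (x, take k es) \<and> lyndon (x @ concat (take k es)) \<and>
    std_s (x @ concat (take k es)) = (if k = 0 then std_s x else es ! (k - 1))"
    using chain k peelable
  proof (induction k)
    case 0
    then show ?case using lx stop peel_stop[of x b] by simp
  next
    case (Suc k)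
    let ?h = "x @ concat (take k es)" and ?e = "es ! k"
    have IH: "peel b ?h = (x, take k es)" "lyndon ?h" "std_s ?h = (if k = 0 then std_s x else es ! (k - 1))"
      using Suc by auto
    have kl: "k < length es" using Suc by simp
    have lyn_e: "lyndon ?e" using lyndon_factorization_lyndon[OF es nth_mem[OF kl]] .
    have he: "?h < ?e" using Suc.prems(1) by simp
    have "?e \<le> std_s ?h"
    proof (cases k)
      case 0
      then show ?thesis using lyndon_factorization_le_hd[OF es nth_mem[OF kl]] hd_le kl IH(3) by auto
    next
      case (Suc j)
      have "es ! k \<le> es ! j"
        using es kl Suc by (simp add: lyndon_factorization_def sorted_wrt_iff_nth_less)
      then show ?thesis using IH(3) Suc by simp
    qed
    then have std: "std_r (?h @ ?e) = ?h" "std_s (?h @ ?e) = ?e"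
      using std_factors_append[OF IH(2) lyn_e he] by auto
    have "peel b (?h @ ?e) = (x, take k es @ [?e])"
      using peel_step[of "?h @ ?e" b] std Suc.prems(3) IH(1) x2 by simp
    then show ?case
      using std lyndon_append[OF IH(2) lyn_e he] kl by (simp add: take_Suc_conv_app_nth)
  qed
  then show ?thesis by simp
qed

lemma peel_hd_lyndon_merge:
  assumes lx: "lyndon x" and x2: "2 \<le> length x" and es: "lyndon_factorization es"
    and even: "\<forall>e\<in>set es. even (length e)"
    and hd_es: "es \<noteq> [] \<Longrightarrow> hd es \<le> std_s x \<and> below b (hd es)"
    and stop: "\<not> (even (length (std_s x)) \<and> below b (std_s x))"
  obtains ps where "peel b (hd (lyndon_merge x es)) = (x, ps)"
    "concat ps @ concat (tl (lyndon_merge x es)) = concat es"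
proof -
  obtain k where k: "k \<le> length es" "lyndon_merge x es = (x @ concat (take k es)) # drop k es"
    "\<forall>i<k. x @ concat (take i es) < es ! i" by (rule lyndon_mergeE)
  have "below b (es ! i)" if "i < length es" for i
  proof -
    have "es \<noteq> []" using that by auto
    then show ?thesis using hd_es lyndon_factorization_le_hd[OF es nth_mem[OF that]]
      by (cases b) (auto intro: order.strict_trans1)
  qed
  then have "\<forall>i<k. even (length (es ! i)) \<and> below b (es ! i)" using even k(1) by simp
  then have "peel b (x @ concat (take k es)) = (x, take k es)"
    using peel_lyndon_merge[OF lx x2 es _ k(3,1) _ stop] hd_es by blast
  then show thesis using that k(2) by (simp flip: concat_append)
qed

definition psi_back :: "'a::linorder list \<times> 'a list \<Rightarrow> 'a list \<times> 'a list" where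
  "psi_back z = (let os = lyndon_fact (fst z); es = lyndon_fact (snd z) in
     if os \<noteq> [] \<and> last os < hd es then (concat (butlast os) @ last os @ hd es, concat (tl es))
     else (let xp = peel (if os = [] then None else Some (last os)) (hd es); x = fst xp;
               E = concat (snd xp) @ concat (tl es) in
       if os \<noteq> [] \<and> last os \<le> std_s x then (concat (butlast os) @ x @ last os, E)
       else (fst z @ std_s x @ std_r x, E)))"

lemma psi_back_split_odd:
  assumes "lyndon_fact Ow = pre @ [o1]" "lyndon_fact E = e # es" "o1 < e"
  shows "psi_back (Ow, E) = (concat pre @ o1 @ e, concat es)"
  using assms by (simp add: psi_back_def)

lemma psi_back_peel:
  assumes "lyndon_fact Ow = os" "\<not> (os \<noteq> [] \<and> last os < hd (lyndon_fact E))"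
    "peel (if os = [] then None else Some (last os)) (hd (lyndon_fact E)) = (x, ps)"
  shows "psi_back (Ow, E) =
    (if os \<noteq> [] \<and> last os \<le> std_s x then (concat (butlast os) @ x @ last os, concat ps @ concat (tl (lyndon_fact E)))
     else (Ow @ std_s x @ std_r x, concat ps @ concat (tl (lyndon_fact E))))"
  using assms unfolding psi_back_def Let_def by (simp only: fst_conv snd_conv if_False)

context psi_source
begin

lemma split_odd_psi_back:
  assumes sp: "splittable pre om" and odd_r: "odd (length (std_r om))"
  shows "psi_back (concat pre @ std_r om, std_s om @ concat es) = (concat pre @ om, concat es)"
proof -
  note new = split_odd_invariant[OF sp odd_r]
  have len: "2 \<le> length om" using sp by (simp add: splittable_def)
  have "lyndon_fact (concat pre @ std_r om) = pre @ [std_r om]"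
    "lyndon_fact (std_s om @ concat es) = std_s om # es"
    using lyndon_fact_concat[OF new(1)] lyndon_fact_concat[OF new(2)] by simp_all
  from psi_back_split_odd[OF this std_r_less_std_s[OF lyndon_om len]] show ?thesis by simp
qed

lemma split_even_psi_back:
  assumes sp: "splittable pre om" and even_r: "even (length (std_r om))"
  shows "psi_back (concat pre @ std_s om, std_r om @ concat es) = (concat pre @ om, concat es)"
proof -
  let ?r = "std_r om" and ?s = "std_s om"
  note new = split_even_invariant[OF sp even_r]
  have len: "2 \<le> length om" using sp by (simp add: splittable_def)
  have lr: "lyndon ?r" using std_r_lyndon[OF lyndon_om len] .
  have r2: "2 \<le> length ?r" using even_length_ge_2[OF even_r std_r_not_Nil[OF len]] .
  have sr: "?s \<le> std_s ?r" using std_s_le_std_s_std_r[OF lyndon_om len r2] .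
  have odd_s: "odd (length ?s)" using length_std_r_std_s[OF len] odd_om even_r by presburger
  have hd_less: "hd es < ?s" if "es \<noteq> []"
  proof -
    have "hd es \<noteq> ?s" using even_es that odd_s by (metis hd_in_set)
    then show ?thesis using hd_es_le_std_s[OF that len] by simp
  qed
  have hd_es: "es \<noteq> [] \<Longrightarrow> hd es \<le> std_s ?r \<and> below (Some ?s) (hd es)"
    using hd_less sr by (auto intro: order.strict_implies_order order.strict_trans2)
  have stop: "\<not> (even (length (std_s ?r)) \<and> below (Some ?s) (std_s ?r))" using sr by (simp add: leD)
  obtain ps where peel: "peel (Some ?s) (hd (lyndon_merge ?r es)) = (?r, ps)"
    and rest: "concat ps @ concat (tl (lyndon_merge ?r es)) = concat es"
    by (rule peel_hd_lyndon_merge[OF lr r2 factorization_E even_es hd_es stop])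
  have fact_E': "lyndon_fact (?r @ concat es) = lyndon_merge ?r es"
    using lyndon_fact_lyndon_merge[OF lr] lyndon_fact_concat[OF factorization_E] by simp
  have not_S: "\<not> (pre @ [?s] \<noteq> [] \<and> last (pre @ [?s]) < hd (lyndon_fact (?r @ concat es)))"
    using new(4) fact_E' by simp
  have peel': "peel (if pre @ [?s] = [] then None else Some (last (pre @ [?s])))
      (hd (lyndon_fact (?r @ concat es))) = (?r, ps)"
    using peel fact_E' by simp
  have P: "pre @ [?s] \<noteq> [] \<and> last (pre @ [?s]) \<le> std_s ?r" using sr by simp
  from psi_back_peel[OF lyndon_fact_concat[OF new(1)] not_S peel', unfolded if_P[OF P]] fact_E' rest
  show ?thesis by simp
qed

lemma fuse_psi_back:
  assumes pre: "pre = pre' @ [a]" and nsp: "\<not> splittable pre om"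
  shows "psi_back (concat pre', om @ a @ concat es) = (concat pre @ om, concat es)"
proof -
  note new = fuse_invariant[OF pre nsp]
  have la: "lyndon a" and oa: "om < a" using factorization_pre om_less_pre pre
    by (simp_all add: lyndon_factorization_append)
  have a_less: "a < f" if "f \<in> set pre'" for f
    using lyndon_factorization_snoc_less[of pre' a] factorization_pre distinct_pre that pre by simp
  have lx: "lyndon (om @ a)" using lyndon_append[OF lyndon_om la oa] .
  have "length om = 1 \<or> a \<le> std_s om"
  proof (cases "2 \<le> length om")
    case False
    then show ?thesis using lyndon_not_Nil[OF lyndon_om] by (cases om) (auto simp: not_le)
  qed (use nsp pre in \<open>auto simp: splittable_def\<close>)
  then have std: "std_r (om @ a) = om" "std_s (om @ a) = a" using std_factors_append[OF lyndon_om la oa] by auto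
  have x2: "2 \<le> length (om @ a)" using lyndon_not_Nil[OF lyndon_om] lyndon_not_Nil[OF la]
    by (cases om; cases a) auto
  define b where "b = (if pre' = [] then None else Some (last pre'))"
  have below_a: "below b v" if "v < a" for v
    using that a_less[of "last pre'"] by (cases "pre' = []") (auto simp: b_def)
  have "es \<noteq> [] \<Longrightarrow> hd es < a" using hd_es_less_pre pre by simp
  then have hd_es: "es \<noteq> [] \<Longrightarrow> hd es \<le> std_s (om @ a) \<and> below b (hd es)"
    using below_a std by simp
  have stop: "\<not> (even (length (std_s (om @ a))) \<and> below b (std_s (om @ a)))"
    using std odd_pre pre by simp
  obtain ps where peel: "peel b (hd (lyndon_merge (om @ a) es)) = (om @ a, ps)"
    and rest: "concat ps @ concat (tl (lyndon_merge (om @ a) es)) = concat es"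
    by (rule peel_hd_lyndon_merge[OF lx x2 factorization_E even_es hd_es stop])
  have fact_E': "lyndon_fact ((om @ a) @ concat es) = lyndon_merge (om @ a) es"
    using lyndon_fact_lyndon_merge[OF lx] lyndon_fact_concat[OF factorization_E] by simp
  have not_S: "\<not> (pre' \<noteq> [] \<and> last pre' < hd (lyndon_fact ((om @ a) @ concat es)))"
    using new(4) fact_E' a_less[of "last pre'"] by auto
  have peel': "peel (if pre' = [] then None else Some (last pre')) (hd (lyndon_fact ((om @ a) @ concat es)))
      = (om @ a, ps)"
    using peel fact_E' by (simp add: b_def)
  have not_P: "\<not> (pre' \<noteq> [] \<and> last pre' \<le> std_s (om @ a))"
    using a_less[of "last pre'"] std by auto
  from psi_back_peel[OF lyndon_fact_concat[OF new(1)] not_S peel', unfolded if_not_P[OF not_P]]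
    fact_E' rest pre std
  show ?thesis by simp
qed

end

lemma psi_back_psi_step:
  assumes "psi_admissible (Ow, E)" "2 \<le> length Ow"
  shows "psi_back (psi_step (Ow, E)) = (Ow, E)"
  using assms(2)
proof (cases rule: psi_step_cases[of Ow E])
  case (S pre om)
  interpret psi_source pre om "lyndon_fact E" using psi_source_lyndon_fact[OF assms(1) S(1)] .
  show ?thesis using S(4) split_odd_psi_back[OF S(2,3)] S(1) concat_lyndon_fact[of Ow] by simp
next
  case (P pre om)
  interpret psi_source pre om "lyndon_fact E" using psi_source_lyndon_fact[OF assms(1) P(1)] .
  show ?thesis using P(4) split_even_psi_back[OF P(2,3)] P(1) concat_lyndon_fact[of Ow] by simp
next
  case (F pre' a om)
  interpret psi_source "pre' @ [a]" om "lyndon_fact E" using psi_source_lyndon_fact[OF assms(1)] F(1) by simp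
  show ?thesis using F(3) fuse_psi_back[OF refl F(2)] F(1) concat_lyndon_fact[of Ow] by simp
qed

locale psi_target =
  fixes os :: "'a::linorder list list" and e :: "'a list" and es :: "'a list list"
  assumes factorization_O: "lyndon_factorization os"
    and factorization_E: "lyndon_factorization (e # es)"
    and invariant: "psi_invariant os (e # es)"
begin

lemma lyndon_e: "lyndon e"
  and factorization_es: "lyndon_factorization es"
  and es_le_e: "g \<in> set es \<Longrightarrow> g \<le> e"
  using factorization_E by (simp_all add: lyndon_factorization_Cons)

lemma hd_es_le_e: "es \<noteq> [] \<Longrightarrow> hd es \<le> e"
  using es_le_e by simp

lemma odd_os: "\<forall>f\<in>set os. odd (length f)"
  and distinct_os: "distinct os"
  and even_e: "even (length e)"
  and even_es: "\<forall>g\<in>set es. even (length g)"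
  and e_less_butlast: "q \<in> set (butlast os) \<Longrightarrow> e < q"
  and e_le_std_s_last: "os \<noteq> [] \<Longrightarrow> 2 \<le> length (last os) \<Longrightarrow> e \<le> std_s (last os)"
  using invariant by (simp_all add: psi_invariant_def)

lemma length_e: "2 \<le> length e"
  using even_length_ge_2[OF even_e lyndon_not_Nil[OF lyndon_e]] .

lemma less_last_os: "f \<in> set (butlast os) \<Longrightarrow> last os < f"
  using factorization_O distinct_os lyndon_factorization_snoc_less[of "butlast os" "last os" f]
  by (cases os rule: rev_cases) auto

lemma e_less_last: "os \<noteq> [] \<Longrightarrow> \<not> last os < e \<Longrightarrow> e < last os"
  using odd_os even_e by (metis last_in_set not_less_iff_gr_or_eq)

lemma unsplit_odd:
  assumes os: "os = pre @ [o1]" and oe: "o1 < e"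
  shows "psi_admissible (concat pre @ o1 @ e, concat es)" "2 \<le> length (concat pre @ o1 @ e)"
    "psi_step (concat pre @ o1 @ e, concat es) = (concat os, e @ concat es)"
proof -
  have lo: "lyndon o1" using factorization_O os by (simp add: lyndon_factorization_append)
  have o_less: "o1 < f" if "f \<in> set pre" for f using less_last_os that os by simp
  have e_less: "e < f" if "f \<in> set pre" for f using e_less_butlast that os by simp
  have loe: "lyndon (o1 @ e)" using lyndon_append[OF lo lyndon_e oe] .
  have oe_less: "o1 @ e < f" if "f \<in> set pre" for f
    using append_less_lyndon[OF _ o_less[OF that] e_less[OF that]]
      lyndon_factorization_lyndon[OF factorization_O] that os by simp
  have fact: "lyndon_factorization (pre @ [o1 @ e])"
    using factorization_O loe oe_less os by (auto simp: lyndon_factorization_append intro: less_imp_le)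
  have "length o1 = 1 \<or> e \<le> std_s o1"
  proof (cases "2 \<le> length o1")
    case False
    then show ?thesis using lyndon_not_Nil[OF lo] by (cases o1) (auto simp: not_le)
  qed (use e_le_std_s_last os in simp)
  then have std: "std_r (o1 @ e) = o1" "std_s (o1 @ e) = e"
    using std_factors_append[OF lo lyndon_e oe] by auto
  show len: "2 \<le> length (concat pre @ o1 @ e)" using length_e by simp
  have "splittable pre (o1 @ e)"
    using e_less length_e std by (cases pre rule: rev_cases) (auto simp: splittable_def)
  then show "psi_step (concat pre @ o1 @ e, concat es) = (concat os, e @ concat es)"
    using psi_step_split_odd[of _ pre "o1 @ e"] lyndon_fact_concat[OF fact] std odd_os os by simp
  show "psi_admissible (concat pre @ o1 @ e, concat es)"
    using odd_os os even_e distinct_os oe_less even_es hd_es_le_e e_less std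
      lyndon_fact_concat[OF fact] lyndon_fact_concat[OF factorization_es]
    by (auto simp: psi_admissible_def psi_invariant_def intro: order.strict_trans1)
qed

lemma peel_largest_factor:
  assumes "peel b e = (x, ps)"
  shows "e = x @ concat ps" "lyndon x" "even (length x)" "2 \<le> length x"
    "\<forall>p\<in>set ps. below b p" "ps \<noteq> [] \<Longrightarrow> hd ps \<le> std_s x"
    "\<not> (even (length (std_s x)) \<and> below b (std_s x))"
    "lyndon_factorization (ps @ es)" "\<forall>g\<in>set (ps @ es). even (length g)"
    "ps = [] \<Longrightarrow> es \<noteq> [] \<Longrightarrow> hd es \<le> x"
proof -
  note peel = peel_decomposition[OF lyndon_e even_e, of b, unfolded assms prod.sel]
  then show e: "e = x @ concat ps" and lx: "lyndon x" and ex: "even (length x)"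
    and "\<forall>p\<in>set ps. below b p" and "ps \<noteq> [] \<Longrightarrow> hd ps \<le> std_s x"
    and "\<not> (even (length (std_s x)) \<and> below b (std_s x))" by simp_all
  show "2 \<le> length x" using even_length_ge_2[OF ex lyndon_not_Nil[OF lx]] .
  show "ps = [] \<Longrightarrow> es \<noteq> [] \<Longrightarrow> hd es \<le> x" using hd_es_le_e e by simp
  have "g \<le> p" if "p \<in> set ps" "g \<in> set es" for p g
  proof -
    have "std_s e \<le> p"
      using peel lyndon_factorization_last_le[of ps p] that(1) by auto
    then show ?thesis using es_le_e[OF that(2)] less_std_s[OF lyndon_e length_e] by simp
  qed
  then show "lyndon_factorization (ps @ es)"
    using peel factorization_es by (simp add: lyndon_factorization_append)
  show "\<forall>g\<in>set (ps @ es). even (length g)" using peel even_es by auto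
qed

lemma unsplit_even:
  assumes os: "os = pre @ [s]" and not_S: "\<not> s < e"
    and peel: "peel (Some s) e = (x, ps)" and sx: "s \<le> std_s x"
  shows "psi_admissible (concat pre @ x @ s, concat ps @ concat es)" "2 \<le> length (concat pre @ x @ s)"
    "psi_step (concat pre @ x @ s, concat ps @ concat es) = (concat os, e @ concat es)"
proof -
  note px = peel_largest_factor[OF peel]
  have ls: "lyndon s" using factorization_O os by (simp add: lyndon_factorization_append)
  have s_less: "s < f" if "f \<in> set pre" for f using less_last_os that os by simp
  have "x \<le> e" using px(1) le_append[of x "concat ps"] by simp
  then have xs: "x < s" using e_less_last not_S os by fastforce
  have lxs: "lyndon (x @ s)" using lyndon_append[OF px(2) ls xs] .
  have xs_less: "x @ s < f" if "f \<in> set pre" for f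
    using lyndon_less_suffix[OF lxs refl lyndon_not_Nil[OF px(2)] lyndon_not_Nil[OF ls]] s_less[OF that]
    by simp
  have fact: "lyndon_factorization (pre @ [x @ s])"
    using factorization_O lxs xs_less os by (auto simp: lyndon_factorization_append intro: less_imp_le)
  have std: "std_r (x @ s) = x" "std_s (x @ s) = s" using std_factors_append[OF px(2) ls xs] sx by auto
  show len: "2 \<le> length (concat pre @ x @ s)" using px(4) by simp
  have "splittable pre (x @ s)"
    using s_less px(4) std by (cases pre rule: rev_cases) (auto simp: splittable_def)
  then show "psi_step (concat pre @ x @ s, concat ps @ concat es) = (concat os, e @ concat es)"
    using psi_step_split_even[of _ pre "x @ s"] lyndon_fact_concat[OF fact] std px(1,3) os by simp
  have hd_less: "hd (ps @ es) < s" if "ps @ es \<noteq> []"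
  proof (cases "ps = []")
    case True
    then show ?thesis using px(10) that xs by simp
  next
    case False
    then show ?thesis using px(5) by simp
  qed
  have "odd (length (x @ s))" using px(3) odd_os os by simp
  then show "psi_admissible (concat pre @ x @ s, concat ps @ concat es)"
    using odd_os os distinct_os xs_less px(9) hd_less s_less std
      lyndon_fact_concat[OF fact] lyndon_fact_concat[OF px(8)]
    by (auto simp: psi_admissible_def psi_invariant_def intro: order.strict_trans order.strict_implies_order)
qed

lemma unfuse:
  assumes not_S: "\<not> (os \<noteq> [] \<and> last os < e)"
    and peel: "peel (if os = [] then None else Some (last os)) e = (x, ps)"
    and not_P: "\<not> (os \<noteq> [] \<and> last os \<le> std_s x)"
  shows "psi_admissible (concat os @ std_s x @ std_r x, concat ps @ concat es)"
    "2 \<le> length (concat os @ std_s x @ std_r x)"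
    "psi_step (concat os @ std_s x @ std_r x, concat ps @ concat es) = (concat os, e @ concat es)"
proof -
  let ?b = "if os = [] then None else Some (last os)" and ?a = "std_s x" and ?r = "std_r x"
  note px = peel_largest_factor[OF peel]
  have la: "lyndon ?a" and lr: "lyndon ?r" and ra: "?r < ?a"
    using std_s_lyndon[OF px(4)] std_r_lyndon[OF px(2,4)] std_r_less_std_s[OF px(2,4)] by simp_all
  have a_less: "?a < f" if "f \<in> set os" for f
    using not_P lyndon_factorization_last_le[OF factorization_O that] that by fastforce
  have "below ?b ?a" using a_less by (cases "os = []") simp_all
  then have odd_a: "odd (length ?a)" using px(7) by simp
  have odd_r: "odd (length ?r)" using length_std_r_std_s[OF px(4)] px(3) odd_a by presburger
  have fact: "lyndon_factorization (os @ [?a, ?r])"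
    using factorization_O la lr ra a_less
    by (auto simp: lyndon_factorization_append lyndon_factorization_Cons intro: less_imp_le order.strict_trans)
  show len: "2 \<le> length (concat os @ ?a @ ?r)" using length_std_r_std_s[OF px(4)] px(4) by simp
  have a_le: "?a \<le> std_s ?r" if "2 \<le> length ?r" using std_s_le_std_s_std_r[OF px(2,4) that] .
  then have "\<not> splittable (os @ [?a]) ?r" by (auto simp: splittable_def)
  then show "psi_step (concat os @ ?a @ ?r, concat ps @ concat es) = (concat os, e @ concat es)"
    using psi_step_fuse[of _ os ?a ?r] lyndon_fact_concat[OF fact] px(1) by simp
  have hd_less: "hd (ps @ es) < ?a" if "ps @ es \<noteq> []"
  proof (cases "ps = []")
    case True
    then show ?thesis using px(1,10) that less_std_s[OF lyndon_e length_e] by simp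
  next
    case False
    have "even (length (hd ps))" using px(9) hd_in_set[OF False] by simp
    then have "hd ps \<noteq> ?a" using odd_a by auto
    then show ?thesis using px(6) False by simp
  qed
  have "distinct (os @ [?a, ?r])" using distinct_os a_less ra by (auto dest: order.strict_trans)
  moreover have "hd (ps @ es) < q" if "ps @ es \<noteq> []" "q \<in> set (butlast (os @ [?a, ?r]))" for q
    using that(2) hd_less[OF that(1)] a_less by (auto simp: butlast_append intro: order.strict_trans)
  ultimately show "psi_admissible (concat os @ ?a @ ?r, concat ps @ concat es)"
    using odd_os odd_a odd_r px(9) hd_less a_le lyndon_fact_concat[OF fact] lyndon_fact_concat[OF px(8)]
    by (auto simp: psi_admissible_def psi_invariant_def intro: order.strict_implies_order order.strict_trans2)
qed

end

lemma psi_step_psi_back: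
  assumes adm: "psi_admissible (Ow, E)" and "E \<noteq> []"
  shows "psi_admissible (psi_back (Ow, E)) \<and> 2 \<le> length (fst (psi_back (Ow, E))) \<and>
    psi_step (psi_back (Ow, E)) = (Ow, E)"
proof -
  define os where "os = lyndon_fact Ow"
  obtain e es where E: "lyndon_fact E = e # es"
    using \<open>E \<noteq> []\<close> by (cases "lyndon_fact E") auto
  interpret psi_target os e es
    using adm E lyndon_factorization_lyndon_fact[of Ow] lyndon_factorization_lyndon_fact[of E]
    by unfold_locales (simp_all add: psi_admissible_def os_def)
  have Ow: "concat os = Ow" and E': "e @ concat es = E"
    using concat_lyndon_fact[of E] E by (simp_all add: os_def)
  show ?thesis
  proof (cases "os \<noteq> [] \<and> last os < e")
    case True
    then obtain pre o1 where os: "os = pre @ [o1]" and "o1 < e"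
      by (cases os rule: rev_cases) auto
    then show ?thesis
      using unsplit_odd[OF os \<open>o1 < e\<close>] psi_back_split_odd[of Ow pre o1 E e es] E Ow E' os_def by simp
  next
    case not_S: False
    obtain x ps where peel: "peel (if os = [] then None else Some (last os)) e = (x, ps)" by fastforce
    note psi_back_eq = psi_back_peel[of Ow os E x ps, unfolded E list.sel, OF os_def[symmetric] not_S peel]
    show ?thesis
    proof (cases "os \<noteq> [] \<and> last os \<le> std_s x")
      case True
      then obtain pre s where os: "os = pre @ [s]" by (cases os rule: rev_cases) auto
      then show ?thesis
        using unsplit_even[OF os _ _] not_S peel True psi_back_eq[unfolded if_P[OF True]] Ow E' by simp
    next
      case False
      then show ?thesis
        using unfuse[OF not_S peel False] psi_back_eq[unfolded if_not_P[OF False]] Ow E' by simp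
    qed
  qed
qed

section \<open>Iterating (\<psi>) and inserting the last letter\<close>

lemma mset_psi_step_iter: "mset (fst ((psi_step ^^ k) z) @ snd ((psi_step ^^ k) z)) = mset (fst z @ snd z)"
proof (induction k)
  case (Suc k)
  then show ?case using mset_psi_step[of "(psi_step ^^ k) z"] by simp
qed simp

lemma psi_admissible_iter: "psi_admissible z \<Longrightarrow> psi_admissible ((psi_step ^^ k) z)"
proof (induction k)
  case (Suc k)
  obtain Ow E where "(psi_step ^^ k) z = (Ow, E)" by fastforce
  then show ?case using Suc psi_admissible_psi_step[of Ow E] by simp
qed simp

lemma length_fst_psi_step_iter: "length (fst ((psi_step ^^ k) z)) \<le> max 1 (length (fst z) - k)"
proof (induction k)
  case (Suc k)
  obtain Ow E where y: "(psi_step ^^ k) z = (Ow, E)" by fastforce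
  show ?case
  proof (cases "length Ow < 2")
    case True
    then show ?thesis using psi_step_short[OF True] y Suc by simp
  next
    case False
    then show ?thesis using psi_step_progress[of Ow E] y Suc by simp
  qed
qed simp

lemma psi_step_iter_short: "length (fst z) \<le> k \<Longrightarrow> length (fst ((psi_step ^^ k) z)) < 2"
  using length_fst_psi_step_iter[of k z] by simp

lemma psi_step_iter_fixed:
  assumes "length (fst y) < 2"
  shows "(psi_step ^^ m) y = y"
proof -
  have "psi_step y = y" using psi_step_short[OF assms, of "snd y"] by simp
  then show ?thesis by (induction m) simp_all
qed

lemma psi_step_iter_eq:
  assumes "length (fst ((psi_step ^^ k) z)) < 2" "length (fst z) \<le> m"
  shows "(psi_step ^^ m) z = (psi_step ^^ k) z"
proof (cases "k \<le> m")
  case True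
  then have "(psi_step ^^ m) z = (psi_step ^^ (m - k)) ((psi_step ^^ k) z)"
    by (simp flip: funpow_add comp_apply[of "psi_step ^^ _"])
  then show ?thesis using psi_step_iter_fixed[OF assms(1)] by simp
next
  case False
  then have "(psi_step ^^ k) z = (psi_step ^^ (k - m)) ((psi_step ^^ m) z)"
    by (simp flip: funpow_add comp_apply[of "psi_step ^^ _"])
  then show ?thesis using psi_step_iter_fixed[OF psi_step_iter_short[OF assms(2)]] by simp
qed

fun psi_unwind :: "nat \<Rightarrow> 'a::linorder list \<times> 'a list \<Rightarrow> 'a list \<times> 'a list" where
  "psi_unwind 0 y = y"
| "psi_unwind (Suc n) y = (if snd y = [] then y else psi_unwind n (psi_back y))"

lemma psi_unwind_iter:
  assumes "psi_admissible z" "snd z = []" "k \<le> N"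
  shows "psi_unwind N ((psi_step ^^ k) z) = z"
  using assms(3)
proof (induction k arbitrary: N)
  case 0
  then show ?case using assms(2) by (cases N) auto
next
  case (Suc k)
  then obtain N' where N: "N = Suc N'" "k \<le> N'" by (cases N) auto
  obtain Ow E where y: "(psi_step ^^ k) z = (Ow, E)" by fastforce
  show ?case
  proof (cases "length Ow < 2")
    case True
    then show ?thesis using Suc.IH[of N] Suc.prems psi_step_short[OF True] y by simp
  next
    case False
    have "psi_admissible (Ow, E)" using psi_admissible_iter[OF assms(1), of k] y by simp
    moreover have "2 \<le> length Ow" using False by simp
    ultimately have "psi_back (psi_step (Ow, E)) = (Ow, E)" "snd (psi_step (Ow, E)) \<noteq> []"
      using psi_back_psi_step psi_step_progress(2) by blast+
    then show ?thesis using Suc.IH[OF N(2)] N(1) y by simp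
  qed
qed

lemma psi_admissible_reachable:
  assumes "psi_admissible y"
  shows "\<exists>w k. psi_admissible (w, []) \<and> (psi_step ^^ k) (w, []) = y"
  using assms
proof (induction "length (snd y)" arbitrary: y rule: less_induct)
  case less
  obtain Ow E where y: "y = (Ow, E)" by fastforce
  show ?case
  proof (cases "E = []")
    case True
    then show ?thesis using less.prems y by (intro exI[of _ Ow] exI[of _ 0]) simp
  next
    case False
    obtain Ox Ex where x: "psi_back (Ow, E) = (Ox, Ex)" by fastforce
    have prev: "psi_admissible (Ox, Ex)" "2 \<le> length Ox" "psi_step (Ox, Ex) = (Ow, E)"
      using psi_step_psi_back[of Ow E] less.prems y False x by simp_all
    have "length Ow + length E = length Ox + length Ex"
      using arg_cong[OF mset_psi_step[of "(Ox, Ex)"], of size] prev(3) by simp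
    then have "length Ex < length E" using psi_step_progress[OF prev(2), of Ex] prev(3) by simp
    then obtain w k where "psi_admissible (w, [])" "(psi_step ^^ k) (w, []) = (Ox, Ex)"
      using less.hyps[of "(Ox, Ex)"] prev(1) y by auto
    then show ?thesis using prev(3) y by (intro exI[of _ w] exI[of _ "Suc k"]) simp
  qed
qed

definition psi_finish :: "'a::linorder list \<times> 'a list \<Rightarrow> 'a list" where
  "psi_finish z = (case z of (Ow, Ew) \<Rightarrow> if Ow = [] then Ew else insert_letter (hd Ow) Ew)"

lemma Psi_eq_psi_finish: "Psi w = psi_finish ((psi_step ^^ length w) (w, []))"
  by (simp add: Psi_def psi_finish_def)

definition insert_factor :: "'a::linorder \<Rightarrow> 'a list list \<Rightarrow> 'a list list" where
  "insert_factor c es = filter (\<lambda>e. \<not> e < [c]) es @ [[c]] @ filter (\<lambda>e. e < [c]) es"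

lemma insert_letter_eq: "insert_letter c E = concat (insert_factor c (lyndon_fact E))"
  by (simp add: insert_letter_def insert_factor_def Let_def)

lemma lyndon_factorization_insert_factor:
  "lyndon_factorization es \<Longrightarrow> lyndon_factorization (insert_factor c es)"
  unfolding insert_factor_def using lyndon_factorization_filter[of es]
  by (auto simp: lyndon_factorization_append lyndon_factorization_Cons intro: less_imp_le dest: leI)

lemma lyndon_fact_insert_letter: "lyndon_fact (insert_letter c E) = insert_factor c (lyndon_fact E)"
  using lyndon_fact_concat[OF lyndon_factorization_insert_factor[OF lyndon_factorization_lyndon_fact]]
  by (simp add: insert_letter_eq)

lemma mset_insert_factor: "mset (insert_factor c es) = add_mset [c] (mset es)"
  using multiset_partition[of "mset es" "\<lambda>e. \<not> e < [c]"] by (simp add: insert_factor_def ac_simps)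

lemma mset_insert_letter: "mset (insert_letter c E) = add_mset c (mset E)"
proof -
  have "mset (concat (filter P es)) + mset (concat (filter (\<lambda>x. \<not> P x) es)) = mset (concat es)"
    for P and es :: "'a list list" by (induction es) (auto simp: ac_simps)
  from this[of "\<lambda>e. \<not> e < [c]" "lyndon_fact E"] show ?thesis
    by (simp add: insert_letter_def Let_def ac_simps)
qed

lemma mset_psi_finish: "length Ow < 2 \<Longrightarrow> mset (psi_finish (Ow, E)) = mset (Ow @ E)"
  by (cases Ow) (auto simp: psi_finish_def mset_insert_letter)

lemma mset_Psi: "mset (Psi w) = mset w"
proof -
  obtain Ow E where run: "(psi_step ^^ length w) (w, []) = (Ow, E)" by fastforce
  then show ?thesis
    using mset_psi_finish[of Ow E] psi_step_iter_short[of "(w, [])" "length w"]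
      mset_psi_step_iter[of "length w" "(w, [])"]
    by (simp add: Psi_eq_psi_finish)
qed

definition even_type :: "'a::linorder list \<Rightarrow> bool" where
  "even_type u \<longleftrightarrow> length (filter (\<lambda>f. odd (length f)) (lyndon_fact u)) \<le> 1 \<and>
     (\<forall>f\<in>set (lyndon_fact u). odd (length f) \<longrightarrow> length f = 1)"

lemma filter_odd_insert_factor:
  "\<forall>e\<in>set es. even (length e) \<Longrightarrow> filter (\<lambda>f. odd (length f)) (insert_factor c es) = [[c]]"
  by (auto simp: insert_factor_def filter_empty_conv)

lemma even_type_psi_finish:
  assumes "psi_admissible (Ow, E)" "length Ow < 2"
  shows "even_type (psi_finish (Ow, E))"
proof -
  have even: "\<forall>e\<in>set (lyndon_fact E). even (length e)"
    using assms(1) by (simp add: psi_admissible_def psi_invariant_def)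
  consider "Ow = []" | c where "Ow = [c]" using assms(2) by (cases Ow) auto
  then show ?thesis
  proof cases
    case 1
    then show ?thesis using even by (simp add: psi_finish_def even_type_def filter_empty_conv)
  next
    case (2 c)
    then show ?thesis using even filter_odd_insert_factor[OF even, of c]
      by (auto simp: psi_finish_def even_type_def lyndon_fact_insert_letter insert_factor_def)
  qed
qed

lemma psi_finish_inj:
  assumes adm: "psi_admissible (O1, E1)" "psi_admissible (O2, E2)"
    and short: "length O1 < 2" "length O2 < 2"
    and len: "length O1 + length E1 = length O2 + length E2"
    and eq: "psi_finish (O1, E1) = psi_finish (O2, E2)"
  shows "(O1, E1) = (O2, E2)"
proof -
  have even: "\<forall>e\<in>set (lyndon_fact E1). even (length e)" "\<forall>e\<in>set (lyndon_fact E2). even (length e)"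
    using adm by (simp_all add: psi_admissible_def psi_invariant_def)
  then have "even (length E1)" "even (length E2)"
    using even_length_concat[of "lyndon_fact E1"] even_length_concat[of "lyndon_fact E2"] by simp_all
  then have "even (length O1) = even (length O2)" using len by presburger
  then consider "O1 = []" "O2 = []" | c1 c2 where "O1 = [c1]" "O2 = [c2]"
    using short by (cases O1; cases O2) auto
  then show ?thesis
  proof cases
    case 1
    then show ?thesis using eq by (simp add: psi_finish_def)
  next
    case (2 c1 c2)
    then have fact_eq: "insert_factor c1 (lyndon_fact E1) = insert_factor c2 (lyndon_fact E2)"
      using arg_cong[OF eq, of lyndon_fact] by (simp add: psi_finish_def lyndon_fact_insert_letter)
    then have "c1 = c2"
      using filter_odd_insert_factor[OF even(1), of c1] filter_odd_insert_factor[OF even(2), of c2] by simp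
    then have "mset (lyndon_fact E1) = mset (lyndon_fact E2)"
      using arg_cong[OF fact_eq, of mset] by (simp add: mset_insert_factor)
    then have "lyndon_fact E1 = lyndon_fact E2"
      by (intro lyndon_factorization_mset_eq lyndon_factorization_lyndon_fact)
    then have "E1 = E2" by (metis concat_lyndon_fact)
    then show ?thesis using 2 \<open>c1 = c2\<close> by simp
  qed
qed

lemma psi_finish_surj:
  assumes "even_type u"
  obtains y where "psi_admissible y" "length (fst y) < 2" "psi_finish y = u"
proof -
  define us where "us = lyndon_fact u"
  define es where "es = filter (\<lambda>f. even (length f)) us"
  have fact_es: "lyndon_factorization es"
    using lyndon_factorization_filter[OF lyndon_factorization_lyndon_fact] by (simp add: es_def us_def)
  have mset_us: "mset us = mset es + mset (filter (\<lambda>f. odd (length f)) us)"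
    using multiset_partition[of "mset us" "\<lambda>f. even (length f)"] by (simp add: es_def)
  show thesis
  proof (cases "filter (\<lambda>f. odd (length f)) us")
    case Nil
    then have "psi_admissible ([], u)"
      by (auto simp: psi_admissible_def psi_invariant_def us_def filter_empty_conv)
    then show thesis using that[of "([], u)"] by (simp add: psi_finish_def)
  next
    case (Cons f fs)
    then have "f \<in> set (filter (\<lambda>f. odd (length f)) us)" "fs = []"
      using assms by (simp_all add: even_type_def us_def)
    then have "f \<in> set us" "odd (length f)" "fs = []" by simp_all
    moreover from this have "length f = 1" using assms by (simp add: even_type_def us_def)
    then obtain c where "f = [c]" by (cases f) auto
    ultimately have odd: "filter (\<lambda>f. odd (length f)) us = [[c]]" using Cons by simp
    have "mset us = add_mset [c] (mset es)" using mset_us[unfolded odd] by simp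
    then have "insert_factor c es = us"
      by (intro lyndon_factorization_mset_eq lyndon_factorization_insert_factor fact_es)
        (simp_all add: us_def lyndon_factorization_lyndon_fact mset_insert_factor)
    then have "psi_finish ([c], concat es) = u"
      using lyndon_fact_concat[OF fact_es] by (simp add: psi_finish_def insert_letter_eq us_def)
    moreover have "psi_admissible ([c], concat es)"
      using lyndon_fact_concat[OF fact_es] by (simp add: psi_admissible_def psi_invariant_def es_def)
    ultimately show thesis using that[of "([c], concat es)"] by simp
  qed
qed

lemma even_type_Psi:
  assumes "psi_admissible (w, [])"
  shows "even_type (Psi w)"
proof -
  obtain Ow E where run: "(psi_step ^^ length w) (w, []) = (Ow, E)" by fastforce
  then show ?thesis
    using even_type_psi_finish[of Ow E] psi_admissible_iter[OF assms, of "length w"]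
      psi_step_iter_short[of "(w, [])" "length w"]
    by (simp add: Psi_eq_psi_finish)
qed

lemma inj_on_Psi: "inj_on Psi {w. psi_admissible (w, [])}"
proof (rule inj_onI)
  fix w1 w2 :: "'a list"
  assume adm: "w1 \<in> {w. psi_admissible (w, [])}" "w2 \<in> {w. psi_admissible (w, [])}"
    and eq: "Psi w1 = Psi w2"
  have "length w1 = length w2" using arg_cong[OF eq, of "size \<circ> mset"] by (simp add: mset_Psi)
  then obtain n where n: "length w1 = n" "length w2 = n" by blast
  obtain O1 E1 where run1: "(psi_step ^^ n) (w1, []) = (O1, E1)" by fastforce
  obtain O2 E2 where run2: "(psi_step ^^ n) (w2, []) = (O2, E2)" by fastforce
  have len: "length O1 + length E1 = length O2 + length E2"
    using arg_cong[OF mset_psi_step_iter[of n "(w1, [])"], of size]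
      arg_cong[OF mset_psi_step_iter[of n "(w2, [])"], of size] run1 run2 n by simp
  have adm_final: "psi_admissible (O1, E1)" "psi_admissible (O2, E2)"
    using psi_admissible_iter[of "(w1, [])" n] psi_admissible_iter[of "(w2, [])" n] adm run1 run2
    by simp_all
  have short: "length O1 < 2" "length O2 < 2"
    using psi_step_iter_short[of "(w1, [])" n] psi_step_iter_short[of "(w2, [])" n] run1 run2 n by simp_all
  have "psi_finish (O1, E1) = psi_finish (O2, E2)"
    using eq run1 run2 n by (simp add: Psi_eq_psi_finish)
  from psi_finish_inj[OF adm_final short len this] have same_final: "(O1, E1) = (O2, E2)" .
  have "(w1, []) = psi_unwind n (O1, E1)" using psi_unwind_iter[of "(w1, [])" n n] adm(1) run1 by simp
  also have "\<dots> = psi_unwind n (O2, E2)" using same_final by (simp only:)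
  also have "\<dots> = (w2, [])" using psi_unwind_iter[of "(w2, [])" n n] adm(2) run2 by simp
  finally show "w1 = w2" by simp
qed

lemma Psi_surj:
  assumes "even_type u"
  obtains w where "psi_admissible (w, [])" "Psi w = u"
proof -
  obtain y where y: "psi_admissible y" "length (fst y) < 2" "psi_finish y = u"
    using psi_finish_surj[OF assms] by blast
  obtain w k where w: "psi_admissible (w, [])" "(psi_step ^^ k) (w, []) = y"
    using psi_admissible_reachable[OF y(1)] by blast
  have "(psi_step ^^ length w) (w, []) = y" using psi_step_iter_eq[of k "(w, [])"] w(2) y(2) by simp
  then show thesis using that w(1) y(3) by (simp add: Psi_eq_psi_finish)
qed

lemma words_mset_eq:
  assumes "mset u = mset w"
  shows "u \<in> words A n \<longleftrightarrow> w \<in> words A n"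
proof -
  have "set u = set w" "length u = length w"
    using mset_eq_setD[OF assms] mset_eq_length[OF assms] by simp_all
  then show ?thesis by (simp add: words_def)
qed

lemma Psi_in_words_iff: "Psi w \<in> words A n \<longleftrightarrow> w \<in> words A n"
  using words_mset_eq[OF mset_Psi] .

lemma W_odd_eq: "W_odd A n = {w \<in> words A n. psi_admissible (w, [])}"
  by (auto simp: W_odd_def psi_admissible_start)

lemma W_even_eq: "W_even A n = {u \<in> words A n. even_type u}"
  by (auto simp: W_even_def even_type_def)

lemma Psi_image_W_odd: "Psi ` W_odd A n = W_even A n"
proof
  show "Psi ` W_odd A n \<subseteq> W_even A n"
    using Psi_in_words_iff even_type_Psi by (auto simp: W_odd_eq W_even_eq)
  show "W_even A n \<subseteq> Psi ` W_odd A n"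
  proof
    fix u assume "u \<in> W_even A n"
    then obtain w where "psi_admissible (w, [])" "Psi w = u" "u \<in> words A n"
      using Psi_surj by (auto simp: W_even_eq)
    then show "u \<in> Psi ` W_odd A n" using Psi_in_words_iff[of w] by (auto simp: W_odd_eq)
  qed
qed

theorem theorem4p3:
  fixes A :: "'a::linorder set" and n :: nat
  assumes "finite A" and "0 < n"
  shows "bij_betw Psi (W_odd A n) (W_even A n) \<and> (\<forall>w\<in>W_odd A n. wt (Psi w) = wt w)"
proof -
  have "inj_on Psi (W_odd A n)" by (rule inj_on_subset[OF inj_on_Psi]) (auto simp: W_odd_eq)
  moreover have "wt (Psi w) = wt w" for w :: "'a list"
    using mset_Psi[of w] by (simp add: wt_def fun_eq_iff flip: count_mset)
  ultimately show ?thesis using Psi_image_W_odd by (simp add: bij_betw_def)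
qed

end
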